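(* Consider the $n$-order passive filter, for $i=1,\dots,m$, \[ \begin{cases} x_{i}^{(n-1)} = -\sum_{k=1}^{n-1}\gamma_{ik}x_{i}^{(n-k-1)}+\gamma_{in}(b_{i}-\hat{b}_{i}),\\ \dot{\hat{b}}_{i} = -S(\omega_{m}-\hat{\eta})\hat{b}_{i}+w_{i},\\ \dot{\hat{\eta}} = -\Gamma_{p}\sum_{i=1}^{m}S(b_{i})\hat{b}_{i}, \end{cases} \qquad w_{i}=B_{pi}^{T}P_{pi}X_{i}, \] under the assumptions that at least two of the measured vectors $b_i$ are non-collinear, and that the gyro bias $\eta$ is bounded and constant ($\dot\eta=0$) and the measured angular velocity $\omega_m(\cdot)$ (hence $\omega(\cdot)$) is bounded. Then the errors $\tilde{b}_{i}=b_{i}-\hat{b}_{i}$, $i=1,\dots,m$, and $\tilde{\eta}=\eta-\hat{\eta}$ converge globally asymptotically to zero.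
   Context: A rigid body has attitude $R\in SO(3)$ with $\dot R=RS(\omega)$, where $\omega$ is the body angular velocity and $S(x)$ is the skew-symmetric matrix with $S(x)y=x\times y$. Given constant inertial vectors $r_i$, $i=1,\dots,m$, the body-frame measurements are $b_i=R^Tr_i$, so $\dot b_i=-S(\omega)b_i$. The rate gyro measures $\omega_m=\omega+\eta$ with unknown bias $\eta$, giving $\dot b_i=-S(\omega_m-\eta)b_i$, $\dot\eta=0$. For each $i$, $\Upsilon_i=(\gamma_{i1},\dots,\gamma_{in})\in\mathbb{R}^n$ is chosen so that both $s^n+\sum_{k=1}^n\gamma_{ik}s^{n-k}$ and $s^{n-1}+\sum_{k=1}^{n-1}\gamma_{ik}s^{n-1-k}$ are Hurwitz (such choices exist, e.g. $\gamma_{ik}=\binom{n}{k}\alpha^k$, $\alpha>0$); $x_i^{(j)}$ denotes the $j$-th time derivative of $x_i\in\mathbb{R}^3$. Set $X_i=[x_i^T,\dot x_i^T,\dots,x_i^{(n-2)T}]^T\in\mathbb{R}^{3(n-1)}$, $A_{pi}=A_{\pi(\Upsilon_i)}\otimes I_3$ where $A_{\pi(\Upsilon_i)}$ is the $(n-1)\times(n-1)$ companion matrix of $(\gamma_{i1},\dots,\gamma_{i,n-1})$ (ones on the superdiagonal, last row $(-\gamma_{i,n-1},\dots,-\gamma_{i1})$), $B_{pi}=\gamma_{in}e_{n-1}\otimes I_3$ with $e_{n-1}=(0,\dots,0,1)^T\in\mathbb{R}^{n-1}$, and $P_{pi}$ the symmetric positive definite solution of $A_{pi}^TP_{pi}+P_{pi}A_{pi}=-Q_{pi}$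 for a given symmetric positive definite $Q_{pi}$. $\Gamma_p$ is a positive definite diagonal gain matrix. *)

theory Defs
  imports "HOL-Analysis.Analysis"
begin

definition skew :: "real^3 \<Rightarrow> real^3^3" where
  "skew x = matrix (\<lambda>y. cross3 x y)"

definition SO3 :: "real^3^3 \<Rightarrow> bool" where
  "SO3 M \<longleftrightarrow> orthogonal_matrix M \<and> det M = 1"

definition meas :: "(real \<Rightarrow> real^3^3) \<Rightarrow> (nat \<Rightarrow> real^3) \<Rightarrow> nat \<Rightarrow> real \<Rightarrow> real^3" where
  "meas R r i t = transpose (R t) *v r i"

definition hurwitz_coeffs :: "(nat \<Rightarrow> real) \<Rightarrow> nat \<Rightarrow> bool" where
  "hurwitz_coeffs g d \<longleftrightarrow>
     (\<forall>z::complex. z ^ d + (\<Sum>k=1..d. complex_of_real (g k) * z ^ (d - k)) = 0 \<longrightarrow> Re z < 0)"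

text \<open>Companion matrix (d x d, 0-based indices) of (g_1,...,g_d):
  ones on the superdiagonal, last row (-g_d, ..., -g_1).\<close>
definition companion :: "(nat \<Rightarrow> real) \<Rightarrow> nat \<Rightarrow> nat \<Rightarrow> nat \<Rightarrow> real" where
  "companion g d p q = (if p + 1 < d then (if q = p + 1 then 1 else 0) else - g (d - q))"

text \<open>Kronecker product M \<otimes> I_3 (index p corresponds to block p div 3, component p mod 3).\<close>
definition kron_I3 :: "(nat \<Rightarrow> nat \<Rightarrow> real) \<Rightarrow> nat \<Rightarrow> nat \<Rightarrow> real" where
  "kron_I3 M p q = M (p div 3) (q div 3) * (if p mod 3 = q mod 3 then 1 else 0)"

definition Ap :: "(nat \<Rightarrow> real) \<Rightarrow> nat \<Rightarrow> nat \<Rightarrow> nat \<Rightarrow> real" where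
  "Ap g n = kron_I3 (companion g (n - 1))"

text \<open>B_{pi} = gamma_{in} e_{n-1} \<otimes> I_3, a 3(n-1) x 3 matrix.\<close>
definition Bp :: "(nat \<Rightarrow> real) \<Rightarrow> nat \<Rightarrow> nat \<Rightarrow> nat \<Rightarrow> real" where
  "Bp g n p k = g n * (if p div 3 = n - 2 then 1 else 0) * (if p mod 3 = k then 1 else 0)"

definition sym_on :: "nat \<Rightarrow> (nat \<Rightarrow> nat \<Rightarrow> real) \<Rightarrow> bool" where
  "sym_on N M \<longleftrightarrow> (\<forall>p<N. \<forall>q<N. M p q = M q p)"

definition posdef_on :: "nat \<Rightarrow> (nat \<Rightarrow> nat \<Rightarrow> real) \<Rightarrow> bool" where
  "posdef_on N M \<longleftrightarrow> sym_on N M \<and>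
     (\<forall>v::nat \<Rightarrow> real. (\<exists>p<N. v p \<noteq> 0) \<longrightarrow> (\<Sum>p<N. \<Sum>q<N. v p * M p q * v q) > 0)"

definition lyap_eq :: "nat \<Rightarrow> (nat \<Rightarrow> nat \<Rightarrow> real) \<Rightarrow> (nat \<Rightarrow> nat \<Rightarrow> real) \<Rightarrow> (nat \<Rightarrow> nat \<Rightarrow> real) \<Rightarrow> bool" where
  "lyap_eq N A P Q \<longleftrightarrow>
     (\<forall>p<N. \<forall>q<N. (\<Sum>s<N. A s p * P s q) + (\<Sum>s<N. P p s * A s q) = - Q p q)"

definition comp3 :: "real^3 \<Rightarrow> nat \<Rightarrow> real" where
  "comp3 v k = [v$1, v$2, v$3] ! k"

text \<open>X_i = [x_i; x_i'; ...; x_i^{(n-2)}] in R^{3(n-1)}; xs j is the j-th derivative.\<close>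
definition stackX :: "nat \<Rightarrow> (nat \<Rightarrow> real^3) \<Rightarrow> nat \<Rightarrow> real" where
  "stackX n xs p = (if p < 3 * (n - 1) then comp3 (xs (p div 3)) (p mod 3) else 0)"

definition corr_w :: "(nat \<Rightarrow> real) \<Rightarrow> nat \<Rightarrow> (nat \<Rightarrow> nat \<Rightarrow> real) \<Rightarrow> (nat \<Rightarrow> real) \<Rightarrow> real^3" where
  "corr_w g n P X =
     (let N = 3 * (n - 1);
          wk = (\<lambda>k. \<Sum>p<N. Bp g n p k * (\<Sum>q<N. P p q * X q))
      in vector [wk 0, wk 1, wk 2])"

text \<open>Indices i range over {0..<m} (paper: 1..m); gamma i k for k = 1..n.
  om_m is the measured angular velocity, eta the constant bias, omega = om_m - eta.
  xd i j is the j-th time derivative of x_i, j = 0..n-1.\<close>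
definition is_solution ::
  "nat \<Rightarrow> nat \<Rightarrow> (nat \<Rightarrow> nat \<Rightarrow> real) \<Rightarrow> real^3^3 \<Rightarrow> (nat \<Rightarrow> nat \<Rightarrow> nat \<Rightarrow> real)
   \<Rightarrow> (real \<Rightarrow> real^3) \<Rightarrow> real^3 \<Rightarrow> (nat \<Rightarrow> real^3)
   \<Rightarrow> (real \<Rightarrow> real^3^3) \<Rightarrow> (nat \<Rightarrow> real \<Rightarrow> real^3) \<Rightarrow> (real \<Rightarrow> real^3)
   \<Rightarrow> (nat \<Rightarrow> nat \<Rightarrow> real \<Rightarrow> real^3) \<Rightarrow> bool" where
  "is_solution n m gam Gam P om_m eta r R bh etah xd \<longleftrightarrow>
    (\<forall>t\<ge>0.
      SO3 (R t) \<and>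
      (R has_vector_derivative (R t ** skew (om_m t - eta))) (at t within {0..}) \<and>
      (\<forall>i<m.
        (\<forall>j<n - 1. (xd i j has_vector_derivative xd i (Suc j) t) (at t within {0..})) \<and>
        xd i (n - 1) t =
          - (\<Sum>k=1..n - 1. gam i k *\<^sub>R xd i (n - k - 1) t)
          + gam i n *\<^sub>R (meas R r i t - bh i t) \<and>
        (bh i has_vector_derivative
          (- cross3 (om_m t - etah t) (bh i t)
           + corr_w (gam i) n (P i) (stackX n (\<lambda>j. xd i j t)))) (at t within {0..})) \<and>
      (etah has_vector_derivative
         (- (Gam *v (\<Sum>i<m. cross3 (meas R r i t) (bh i t))))) (at t within {0..}))"

end

theory Submission
  imports Defs
begin

text \<open>
  With \<open>b_err = b - bh\<close> and \<open>eta_err = eta - etah\<close>, the function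
  \<open>V = \<Sum>\<^sub>i X\<^sub>i\<^sup>T P\<^sub>i X\<^sub>i + \<Sum>\<^sub>i |b_err\<^sub>i|\<^sup>2 + eta_err\<^sup>T \<Gamma>\<^sup>-\<^sup>1 eta_err\<close> is a Lyapunov function of the
  closed loop: the correction \<open>w\<^sub>i = B\<^sub>p\<^sub>i\<^sup>T P\<^sub>i X\<^sub>i\<close> and the bias update cancel all cross terms, so
  \<open>V' = -\<Sum>\<^sub>i X\<^sub>i\<^sup>T Q\<^sub>i X\<^sub>i \<le> 0\<close>. Thus \<open>V(t) \<le> V(0)\<close>, which gives stability and bounds every
  signal, and \<open>V\<close> converges. Barbalat's lemma, applied three times, gives convergence:
  to \<open>V\<close>, so \<open>X\<^sub>i \<rightarrow> 0\<close>; to the top filter state, so the filter equation forces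
  \<open>b_err\<^sub>i \<rightarrow> 0\<close> (a Hurwitz polynomial has nonzero constant term \<open>\<gamma>\<^sub>i\<^sub>n\<close>); and to \<open>b_err\<^sub>i\<close>,
  so \<open>eta_err \<times> bh\<^sub>i \<rightarrow> 0\<close>. Since \<open>b\<^sub>i = R\<^sup>T r\<^sub>i\<close> with \<open>R\<close> orthogonal, two non-collinear \<open>r\<^sub>i\<close>
  then force \<open>eta_err \<rightarrow> 0\<close>.
\<close>

definition quad_form :: "nat \<Rightarrow> (nat \<Rightarrow> nat \<Rightarrow> real) \<Rightarrow> (nat \<Rightarrow> real) \<Rightarrow> real" where
  "quad_form N M v = (\<Sum>p<N. \<Sum>q<N. v p * M p q * v q)"

lemma quad_form_scale: "quad_form N M (\<lambda>p. c * v p) = c\<^sup>2 * quad_form N M v"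
  unfolding quad_form_def by (simp add: sum_distrib_left power2_eq_square algebra_simps)

lemma quad_form_cong: "(\<And>p. p < N \<Longrightarrow> u p = v p) \<Longrightarrow> quad_form N M u = quad_form N M v"
  unfolding quad_form_def by simp

definition unit_sphere_on :: "nat \<Rightarrow> (nat \<Rightarrow> real) set" where
  "unit_sphere_on N = {v. (\<forall>p\<ge>N. v p = 0) \<and> (\<Sum>p<N. (v p)\<^sup>2) = 1}"

lemma square_le_sum_squares: "p < N \<Longrightarrow> (v p)\<^sup>2 \<le> (\<Sum>q<N. (v q)\<^sup>2)"
  for v :: "nat \<Rightarrow> real"
  by (intro member_le_sum) auto

lemma compact_unit_sphere_on: "compact (unit_sphere_on N)"
proof -
  define box where "box = PiE UNIV (\<lambda>p::nat. if p < N then {-1..1::real} else {0})"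
  have "compactin (product_topology (\<lambda>_. euclidean) UNIV) box"
    unfolding box_def by (subst compactin_PiE) auto
  then have "compact box" by (simp add: euclidean_product_topology)
  have "continuous_on UNIV (\<lambda>v::nat\<Rightarrow>real. \<Sum>p<N. (v p)\<^sup>2)"
    by (intro continuous_intros continuous_on_product_then_coordinatewise continuous_on_id)
  then have "closed {v::nat\<Rightarrow>real. (\<Sum>p<N. (v p)\<^sup>2) = 1}"
    using continuous_closed_preimage_constant[OF _ closed_UNIV, of _ 1]
    by (simp add: vimage_def Collect_conj_eq)
  moreover have "unit_sphere_on N = box \<inter> {v. (\<Sum>p<N. (v p)\<^sup>2) = 1}"
  proof (intro equalityI subsetI)
    fix v assume v: "v \<in> unit_sphere_on N"
    have "\<bar>v p\<bar> \<le> 1" if "p < N" for p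
      using square_le_sum_squares[OF that, of v] v
      by (simp add: unit_sphere_on_def abs_square_le_1[symmetric])
    then show "v \<in> box \<inter> {v. (\<Sum>p<N. (v p)\<^sup>2) = 1}"
      using v by (auto simp: unit_sphere_on_def box_def PiE_def extensional_def abs_le_iff)
  next
    fix v assume v: "v \<in> box \<inter> {v. (\<Sum>p<N. (v p)\<^sup>2) = 1}"
    have "v p = 0" if "p \<ge> N" for p
      using PiE_mem[of v UNIV "\<lambda>p. if p < N then {-1..1} else {0}" p] v that unfolding box_def by (auto simp: not_less[symmetric])
    then show "v \<in> unit_sphere_on N" using v by (simp add: unit_sphere_on_def)
  qed
  ultimately show ?thesis using \<open>compact box\<close> by (simp add: compact_Int_closed)
qed

lemma normalize_mem_unit_sphere_on:
  assumes "(\<Sum>p<N. (v p)\<^sup>2) = s" "s > 0"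
  shows "(\<lambda>p. if p < N then v p / sqrt s else 0) \<in> unit_sphere_on N"
  using assms by (simp add: unit_sphere_on_def power_divide sum_divide_distrib[symmetric])

lemma posdef_on_coercive:
  assumes "posdef_on N M"
  obtains c where "c > 0" "\<And>v. c * (\<Sum>p<N. (v p)\<^sup>2) \<le> quad_form N M v"
proof (cases "N = 0")
  case True
  then show ?thesis by (intro that[of 1]) (simp_all add: quad_form_def)
next
  case False
  have "(\<lambda>p. (if p = 0 then 1 else 0::real)\<^sup>2) = (\<lambda>p. if p = 0 then 1 else 0)" by auto
  then have "(\<Sum>p<N. (if p = 0 then 1 else 0::real)\<^sup>2) = (\<Sum>p<N. if p = 0 then 1 else 0)"
    by (metis (no_types))
  also have "\<dots> = 1" using False by simp
  finally have "(\<Sum>p<N. (if p = 0 then 1 else 0::real)\<^sup>2) = 1" .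
  then have "(\<lambda>p. if p < N then (if p = 0 then 1 else 0) / sqrt 1 else 0) \<in> unit_sphere_on N"
    by (intro normalize_mem_unit_sphere_on) simp_all
  then have ne: "unit_sphere_on N \<noteq> {}" by blast
  have "continuous_on (unit_sphere_on N) (quad_form N M)"
    unfolding quad_form_def
    by (intro continuous_intros continuous_on_product_then_coordinatewise continuous_on_id)
  then obtain u where u: "u \<in> unit_sphere_on N"
    and umin: "\<And>v. v \<in> unit_sphere_on N \<Longrightarrow> quad_form N M u \<le> quad_form N M v"
    using continuous_attains_inf[OF compact_unit_sphere_on ne] by blast
  have "\<exists>p<N. u p \<noteq> 0"
  proof (rule ccontr)
    assume "\<not> (\<exists>p<N. u p \<noteq> 0)"
    then show False using u by (simp add: unit_sphere_on_def)
  qed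
  then have upos: "quad_form N M u > 0"
    using assms unfolding posdef_on_def quad_form_def by blast
  show ?thesis
  proof (rule that[OF upos])
    fix v :: "nat \<Rightarrow> real"
    define s where "s = (\<Sum>p<N. (v p)\<^sup>2)"
    show "quad_form N M u * (\<Sum>p<N. (v p)\<^sup>2) \<le> quad_form N M v"
    proof (cases "s = 0")
      case True
      then have "\<forall>p<N. v p = 0" unfolding s_def by (subst (asm) sum_nonneg_eq_0_iff) auto
      then show ?thesis using True by (simp add: s_def quad_form_def)
    next
      case False
      then have s: "s > 0" unfolding s_def by (metis sum_nonneg zero_le_power2 order_le_less)
      have "quad_form N M u \<le> quad_form N M (\<lambda>p. if p < N then v p / sqrt s else 0)"
        using normalize_mem_unit_sphere_on[OF s_def[symmetric] s] by (rule umin)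
      also have "\<dots> = quad_form N M (\<lambda>p. (1 / sqrt s) * v p)"
        by (rule quad_form_cong) simp
      also have "\<dots> = quad_form N M v / s"
        unfolding quad_form_scale using s by (simp add: power_divide)
      finally show ?thesis using s by (simp add: s_def[symmetric] field_simps)
    qed
  qed
qed

lemma quad_form_nonneg:
  assumes "posdef_on N M"
  shows "quad_form N M v \<ge> 0"
proof -
  obtain c where "c > 0" "c * (\<Sum>p<N. (v p)\<^sup>2) \<le> quad_form N M v"
    using posdef_on_coercive[OF assms] by metis
  moreover have "(\<Sum>p<N. (v p)\<^sup>2) \<ge> 0" by (simp add: sum_nonneg)
  ultimately show ?thesis by (smt (verit) mult_nonneg_nonneg)
qed

lemma quad_form_le_abs_sum:
  assumes "\<forall>p<N. \<bar>x p\<bar> \<le> d"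
  shows "quad_form N M x \<le> (\<Sum>p<N. \<Sum>q<N. \<bar>M p q\<bar>) * d\<^sup>2"
proof -
  have "quad_form N M x \<le> (\<Sum>p<N. \<Sum>q<N. \<bar>x p * M p q * x q\<bar>)"
    unfolding quad_form_def by (intro sum_mono abs_ge_self)
  also have "\<dots> \<le> (\<Sum>p<N. \<Sum>q<N. \<bar>M p q\<bar> * d\<^sup>2)"
  proof (intro sum_mono)
    fix p q assume "p \<in> {..<N}" "q \<in> {..<N}"
    then have "\<bar>x p\<bar> \<le> d" "\<bar>x q\<bar> \<le> d" using assms by auto
    then have "\<bar>M p q\<bar> * (\<bar>x p\<bar> * \<bar>x q\<bar>) \<le> \<bar>M p q\<bar> * (d * d)"
      by (intro mult_left_mono mult_mono) auto
    then show "\<bar>x p * M p q * x q\<bar> \<le> \<bar>M p q\<bar> * d\<^sup>2" by (simp add: abs_mult power2_eq_square mult_ac)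
  qed
  finally show ?thesis by (simp add: sum_distrib_right)
qed

lemma has_real_derivative_quad_form:
  assumes "\<forall>p<N. ((\<lambda>t. x t p) has_real_derivative x' p) (at t0 within S)"
  shows "((\<lambda>t. quad_form N M (x t)) has_real_derivative
     (\<Sum>p<N. \<Sum>q<N. x' p * M p q * x t0 q + x t0 p * M p q * x' q)) (at t0 within S)"
  unfolding quad_form_def
  by (rule DERIV_sum, rule DERIV_sum, rule derivative_eq_intros, rule derivative_eq_intros,
      use assms in auto)

lemma quad_form_derivative_bound:
  fixes x x' :: "nat \<Rightarrow> real" and M :: "nat \<Rightarrow> nat \<Rightarrow> real"
  assumes "\<forall>p<N. \<bar>x p\<bar> \<le> B" "\<forall>p<N. \<bar>x' p\<bar> \<le> B"
  shows "\<bar>\<Sum>p<N. \<Sum>q<N. x' p * M p q * x q + x p * M p q * x' q\<bar>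
         \<le> (\<Sum>p<N. \<Sum>q<N. 2 * (B * \<bar>M p q\<bar> * B))"
proof -
  have "\<bar>\<Sum>p<N. \<Sum>q<N. x' p * M p q * x q + x p * M p q * x' q\<bar>
      \<le> (\<Sum>p<N. \<Sum>q<N. \<bar>x' p * M p q * x q + x p * M p q * x' q\<bar>)"
    by (rule order_trans[OF sum_abs sum_mono[OF sum_abs]])
  also have "\<dots> \<le> (\<Sum>p<N. \<Sum>q<N. 2 * (B * \<bar>M p q\<bar> * B))"
  proof (intro sum_mono)
    fix p q assume "p \<in> {..<N}" "q \<in> {..<N}"
    then have a: "\<bar>x p\<bar> \<le> B" "\<bar>x' p\<bar> \<le> B" "\<bar>x q\<bar> \<le> B" "\<bar>x' q\<bar> \<le> B" using assms by auto
    have "\<bar>x' p * M p q * x q\<bar> \<le> B * \<bar>M p q\<bar> * B" "\<bar>x p * M p q * x' q\<bar> \<le> B * \<bar>M p q\<bar> * B"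
      unfolding abs_mult using a by (intro mult_mono; auto)+
    then show "\<bar>x' p * M p q * x q + x p * M p q * x' q\<bar> \<le> 2 * (B * \<bar>M p q\<bar> * B)"
      by (smt (verit) abs_triangle_ineq)
  qed
  finally show ?thesis .
qed

lemma linear_form_abs_bound:
  fixes Bm :: "nat \<Rightarrow> real" and M :: "nat \<Rightarrow> nat \<Rightarrow> real"
  assumes "\<forall>q<N. \<bar>x q\<bar> \<le> B"
  shows "\<bar>\<Sum>p<N. Bm p * (\<Sum>q<N. M p q * x q)\<bar> \<le> (\<Sum>p<N. \<bar>Bm p\<bar> * (\<Sum>q<N. \<bar>M p q\<bar> * B))"
proof -
  have "\<bar>\<Sum>q<N. M p q * x q\<bar> \<le> (\<Sum>q<N. \<bar>M p q\<bar> * B)" for p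
    using assms by (intro order_trans[OF sum_abs] sum_mono) (auto simp: abs_mult intro: mult_left_mono)
  then show ?thesis
    by (intro order_trans[OF sum_abs] sum_mono) (auto simp: abs_mult intro: mult_left_mono)
qed

lemma lyap_eq_quad_form_derivative:
  fixes A P Q :: "nat \<Rightarrow> nat \<Rightarrow> real"
  assumes "lyap_eq N A P Q"
  shows "(\<Sum>p<N. \<Sum>q<N. (\<Sum>s<N. A p s * x s) * P p q * x q + x p * P p q * (\<Sum>s<N. A q s * x s))
         = - quad_form N Q x"
proof -
  have left: "(\<Sum>p<N. \<Sum>q<N. (\<Sum>s<N. A p s * x s) * P p q * x q)
        = (\<Sum>a<N. \<Sum>b<N. x a * x b * (\<Sum>s<N. A s a * P s b))"
  proof -
    have "(\<Sum>p<N. \<Sum>q<N. (\<Sum>s<N. A p s * x s) * P p q * x q)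
       = (\<Sum>p<N. \<Sum>q<N. \<Sum>s<N. x s * x q * (A p s * P p q))"
      unfolding sum_distrib_right sum_distrib_left by (simp add: mult_ac)
    also have "\<dots> = (\<Sum>s<N. \<Sum>q<N. \<Sum>p<N. x s * x q * (A p s * P p q))"
      by (subst sum.swap, subst sum.swap) (rule sum.cong[OF refl], rule sum.swap)
    finally show ?thesis by (simp add: sum_distrib_left)
  qed
  have right: "(\<Sum>p<N. \<Sum>q<N. x p * P p q * (\<Sum>s<N. A q s * x s))
        = (\<Sum>a<N. \<Sum>b<N. x a * x b * (\<Sum>s<N. P a s * A s b))"
  proof -
    have "(\<Sum>p<N. \<Sum>q<N. x p * P p q * (\<Sum>s<N. A q s * x s))
       = (\<Sum>p<N. \<Sum>q<N. \<Sum>s<N. x p * x s * (P p q * A q s))"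
      unfolding sum_distrib_right sum_distrib_left by (simp add: mult_ac)
    also have "\<dots> = (\<Sum>p<N. \<Sum>s<N. \<Sum>q<N. x p * x s * (P p q * A q s))"
      by (rule sum.cong[OF refl], rule sum.swap)
    finally show ?thesis by (simp add: sum_distrib_left)
  qed
  have "(\<Sum>p<N. \<Sum>q<N. (\<Sum>s<N. A p s * x s) * P p q * x q + x p * P p q * (\<Sum>s<N. A q s * x s))
      = (\<Sum>a<N. \<Sum>b<N. x a * x b * ((\<Sum>s<N. A s a * P s b) + (\<Sum>s<N. P a s * A s b)))"
    by (simp add: sum.distrib left right distrib_left)
  also have "\<dots> = (\<Sum>a<N. \<Sum>b<N. x a * x b * (- Q a b))"
    using assms unfolding lyap_eq_def by (intro sum.cong refl) auto
  also have "\<dots> = - quad_form N Q x"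
    unfolding quad_form_def by (simp add: sum_negf mult_ac)
  finally show ?thesis .
qed

lemma sym_on_quad_form_cross_terms:
  fixes P :: "nat \<Rightarrow> nat \<Rightarrow> real"
  assumes "sym_on N P"
  shows "(\<Sum>p<N. \<Sum>q<N. (\<Sum>k<K. Bm p k * u k) * P p q * x q + x p * P p q * (\<Sum>k<K. Bm q k * u k))
         = 2 * (\<Sum>k<K. u k * (\<Sum>p<N. Bm p k * (\<Sum>q<N. P p q * x q)))"
proof -
  have left: "(\<Sum>p<N. \<Sum>q<N. (\<Sum>k<K. Bm p k * u k) * P p q * x q)
      = (\<Sum>k<K. u k * (\<Sum>p<N. Bm p k * (\<Sum>q<N. P p q * x q)))"
  proof -
    have "(\<Sum>p<N. \<Sum>q<N. (\<Sum>k<K. Bm p k * u k) * P p q * x q)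
        = (\<Sum>p<N. \<Sum>q<N. \<Sum>k<K. u k * (Bm p k * (P p q * x q)))"
      unfolding sum_distrib_right sum_distrib_left by (simp add: mult_ac)
    also have "\<dots> = (\<Sum>k<K. \<Sum>p<N. \<Sum>q<N. u k * (Bm p k * (P p q * x q)))"
      by (subst sum.swap) (rule sum.cong[OF refl], rule sum.swap)
    finally show ?thesis by (simp add: sum_distrib_left)
  qed
  have "(\<Sum>p<N. \<Sum>q<N. x p * P p q * (\<Sum>k<K. Bm q k * u k))
      = (\<Sum>q<N. \<Sum>p<N. (\<Sum>k<K. Bm q k * u k) * P q p * x p)"
    using assms unfolding sym_on_def
    by (subst sum.swap) (intro sum.cong refl, simp add: mult_ac)
  then show ?thesis unfolding sum.distrib left by simp
qed

lemma mvt_within_atLeast: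
  fixes f f' :: "real \<Rightarrow> real"
  assumes "0 \<le> a" "a \<le> b" "\<forall>t\<ge>0. (f has_real_derivative f' t) (at t within {0..})"
  obtains x where "x \<in> {a..b}" "f b - f a = f' x * (b - a)"
proof -
  have "(f has_derivative (\<lambda>d. f' x * d)) (at x within {a..b})" if "a \<le> x" "x \<le> b" for x
    using has_field_derivative_subset[of f "f' x" x "{0..}" "{a..b}"] assms that
    by (simp add: has_field_derivative_def subset_iff)
  from mvt_very_simple[OF assms(2) this] that show ?thesis by auto
qed

text \<open>If \<open>g\<close> has bounded derivative and drifts \<open>y\<close> (up to a small \<open>h\<close>), then \<open>g \<ge> e\<close> would
  persist on an interval of length \<open>e/(2M)\<close> and move \<open>y\<close> by more than its oscillation allows.\<close>

lemma barbalat_step: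
  fixes y g h g' :: "real \<Rightarrow> real"
  assumes dy: "\<forall>t\<ge>0. (y has_real_derivative (g t + h t)) (at t within {0..})"
    and dg: "\<forall>t\<ge>0. (g has_real_derivative g' t) (at t within {0..})"
    and bd: "\<forall>t\<ge>0. \<bar>g' t\<bar> \<le> M"
    and e: "e > 0" and M: "M > 0" and T: "T \<ge> 0"
    and hT: "\<forall>t\<ge>T. \<bar>h t\<bar> \<le> e/4"
    and yT: "\<forall>t\<ge>T. \<bar>y t - L\<bar> < e * (e / (2*M)) / 16"
    and t: "t \<ge> T"
  shows "g t < e"
proof (rule ccontr)
  assume "\<not> g t < e"
  define d where "d = e / (2*M)"
  have d: "d > 0" using e M by (simp add: d_def)
  have gs: "g s \<ge> e/2" if "t \<le> s" "s \<le> t + d" for s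
  proof -
    obtain x where x: "x \<in> {t..s}" "g s - g t = g' x * (s - t)"
      using mvt_within_atLeast[OF _ \<open>t \<le> s\<close> dg] t T by auto
    have "\<bar>g' x * (s - t)\<bar> \<le> M * d"
      using bd x t T that d by (auto simp: abs_mult intro!: mult_mono)
    also have "M * d = e/2" using M by (simp add: d_def)
    finally show ?thesis using x \<open>\<not> g t < e\<close> by linarith
  qed
  obtain x where x: "x \<in> {t..t+d}" "y (t+d) - y t = (g x + h x) * (t + d - t)"
    using mvt_within_atLeast[of t "t+d" y "\<lambda>x. g x + h x"] dy t T d by auto
  have "g x \<ge> e/2" "\<bar>h x\<bar> \<le> e/4" using gs[of x] x hT t by auto
  then have "g x + h x \<ge> e/4" by linarith
  then have "y (t+d) - y t \<ge> e/4 * d" using x d by (simp add: mult_right_mono)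
  moreover have "\<bar>y (t+d) - L\<bar> < e * d / 16" "\<bar>y t - L\<bar> < e * d / 16"
    using yT t d by (auto simp: d_def)
  moreover have "e * d > 0" using e d by simp
  moreover have "e/4 * d = (e * d)/4" by simp
  ultimately show False by linarith
qed

lemma barbalat:
  fixes y g h g' :: "real \<Rightarrow> real"
  assumes dy: "\<forall>t\<ge>0. (y has_real_derivative (g t + h t)) (at t within {0..})"
    and dg: "\<forall>t\<ge>0. (g has_real_derivative g' t) (at t within {0..})"
    and bd: "\<forall>t\<ge>0. \<bar>g' t\<bar> \<le> M"
    and h: "(h \<longlongrightarrow> 0) at_top"
    and y: "(y \<longlongrightarrow> L) at_top"
  shows "(g \<longlongrightarrow> 0) at_top"
proof (rule tendstoI)
  fix e :: real assume e: "e > 0"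
  define M' where "M' = max M 1"
  have M': "M' > 0" "\<forall>t\<ge>0. \<bar>g' t\<bar> \<le> M'" using bd by (auto simp: M'_def)
  define \<epsilon> where "\<epsilon> = e * (e / (2*M')) / 16"
  have "\<epsilon> > 0" using e M' by (simp add: \<epsilon>_def)
  have "eventually (\<lambda>t. dist (h t) 0 < e/4) at_top" by (rule tendstoD[OF h]) (use e in simp)
  moreover have "eventually (\<lambda>t. dist (y t) L < \<epsilon>) at_top" by (rule tendstoD[OF y \<open>\<epsilon> > 0\<close>])
  moreover have "eventually (\<lambda>t::real. t \<ge> 0) at_top" by (rule eventually_ge_at_top)
  ultimately have "eventually (\<lambda>t. \<bar>h t\<bar> < e/4 \<and> \<bar>y t - L\<bar> < \<epsilon> \<and> t \<ge> 0) at_top"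
    by eventually_elim (auto simp: dist_real_def)
  then obtain T where T: "\<forall>t\<ge>T. \<bar>h t\<bar> < e/4 \<and> \<bar>y t - L\<bar> < \<epsilon> \<and> t \<ge> 0"
    by (auto simp: eventually_at_top_linorder)
  have T0: "T \<ge> 0" and hT: "\<forall>t\<ge>T. \<bar>h t\<bar> \<le> e/4" and yT: "\<forall>t\<ge>T. \<bar>y t - L\<bar> < \<epsilon>"
    using T by auto
  have upper: "g t < e" if "t \<ge> T" for t
    using barbalat_step[OF dy dg M'(2) e M'(1) T0 hT yT[unfolded \<epsilon>_def] that] .
  have lower: "- g t < e" if "t \<ge> T" for t
  proof (rule barbalat_step[of _ _ "\<lambda>t. - h t" _ M' e T "- L", OF _ _ _ e M'(1) T0 _ _ that])
    show "\<forall>t\<ge>0. ((\<lambda>t. - y t) has_real_derivative - g t + - h t) (at t within {0..})"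
      using dy by (auto intro!: derivative_eq_intros)
    show "\<forall>t\<ge>0. ((\<lambda>t. - g t) has_real_derivative - g' t) (at t within {0..})"
      using dg by (auto intro!: derivative_eq_intros)
    show "\<forall>t\<ge>0. \<bar>- g' t\<bar> \<le> M'" using M'(2) by simp
    show "\<forall>t\<ge>T. \<bar>- h t\<bar> \<le> e/4" using hT by simp
    show "\<forall>t\<ge>T. \<bar>- y t - - L\<bar> < e * (e / (2*M')) / 16"
      using yT unfolding \<epsilon>_def by (simp add: abs_minus_commute)
  qed
  show "eventually (\<lambda>t. dist (g t) 0 < e) at_top"
    unfolding eventually_at_top_linorder dist_real_def
    using upper lower by (intro exI[of _ T]) (simp add: abs_less_iff)
qed

lemma barbalat_vec:
  fixes y g h g' :: "real \<Rightarrow> real^'n"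
  assumes dy: "\<forall>t\<ge>0. (y has_vector_derivative (g t + h t)) (at t within {0..})"
    and dg: "\<forall>t\<ge>0. (g has_vector_derivative g' t) (at t within {0..})"
    and bd: "\<forall>t\<ge>0. norm (g' t) \<le> M"
    and h: "(h \<longlongrightarrow> 0) at_top"
    and y: "(y \<longlongrightarrow> L) at_top"
  shows "(g \<longlongrightarrow> 0) at_top"
proof (rule vec_tendstoI)
  fix a
  have nth: "((\<lambda>t. f t $ a) has_real_derivative f' $ a) (at t within {0..})"
    if "(f has_vector_derivative f') (at t within {0..})" for f :: "real \<Rightarrow> real^'n" and f' t
    using bounded_linear.has_vector_derivative[OF bounded_linear_vec_nth that]
    by (simp add: has_real_derivative_iff_has_vector_derivative)
  have "((\<lambda>t. g t $ a) \<longlongrightarrow> 0) at_top"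
  proof (rule barbalat[where h = "\<lambda>t. h t $ a" and M = M and L = "L $ a"])
    show "\<forall>t\<ge>0. ((\<lambda>t. y t $ a) has_real_derivative g t $ a + h t $ a) (at t within {0..})"
      using nth dy by (metis vector_add_component)
    show "\<forall>t\<ge>0. ((\<lambda>t. g t $ a) has_real_derivative g' t $ a) (at t within {0..})"
      using nth dg by blast
    show "\<forall>t\<ge>0. \<bar>g' t $ a\<bar> \<le> M"
      using bd component_le_norm_cart order_trans by blast
  qed (use tendsto_vec_nth[OF h] tendsto_vec_nth[OF y] in auto)
  then show "((\<lambda>t. g t $ a) \<longlongrightarrow> 0 $ a) at_top" by simp
qed

lemma sum_lessThan_mult_3: "(\<Sum>q<3*d. f q) = (\<Sum>j<d. \<Sum>c<3. f (3*j + c::nat))"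
proof (induction d)
  case 0 then show ?case by simp
next
  case (Suc d)
  have "{..<3 * Suc d} = {..<3*d} \<union> {3*d, 3*d+1, 3*d+2}" by auto
  then have "(\<Sum>q<3*Suc d. f q) = (\<Sum>q<3*d. f q) + (f (3*d) + f (3*d+1) + f (3*d+2))"
    by (simp add: sum.union_disjoint add_ac)
  then show ?case using Suc by (simp add: numeral_3_eq_3)
qed

lemma less_3_cases: "(k::nat) < 3 \<Longrightarrow> k = 0 \<or> k = Suc 0 \<or> k = Suc (Suc 0)"
  by auto

lemma comp3_add: "k < 3 \<Longrightarrow> comp3 (a + b) k = comp3 a k + comp3 b k"
  and comp3_diff: "k < 3 \<Longrightarrow> comp3 (a - b) k = comp3 a k - comp3 b k"
  and comp3_minus: "k < 3 \<Longrightarrow> comp3 (- a) k = - comp3 a k"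
  and comp3_scaleR: "k < 3 \<Longrightarrow> comp3 (c *\<^sub>R a) k = c * comp3 a k"
  and comp3_sum: "k < 3 \<Longrightarrow> comp3 (\<Sum>i\<in>I. f i) k = (\<Sum>i\<in>I. comp3 (f i) k)"
  by (auto dest!: less_3_cases simp: comp3_def)

lemma norm_le_comp3: "norm (v::real^3) \<le> \<bar>comp3 v 0\<bar> + \<bar>comp3 v 1\<bar> + \<bar>comp3 v 2\<bar>"
  using norm_le_l1_cart[of v] by (simp add: sum_3 comp3_def)

lemma comp3_le_norm: "k < 3 \<Longrightarrow> \<bar>comp3 v k\<bar> \<le> norm v"
  by (auto dest!: less_3_cases simp: comp3_def component_le_norm_cart)

lemma has_real_derivative_comp3:
  assumes "k < 3" "(f has_vector_derivative f') F"
  shows "((\<lambda>t. comp3 (f t) k) has_real_derivative comp3 f' k) F"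
proof -
  have "((\<lambda>t. f t $ i) has_real_derivative f' $ i) F" for i
    using bounded_linear.has_vector_derivative[OF bounded_linear_vec_nth assms(2)]
    by (simp add: has_real_derivative_iff_has_vector_derivative)
  with assms(1) show ?thesis by (auto dest!: less_3_cases simp: comp3_def)
qed

lemma stackX_block: "j < n - 1 \<Longrightarrow> k < 3 \<Longrightarrow> stackX n x (3*j + k) = comp3 (x j) k"
  by (simp add: stackX_def)

lemma Ap_stackX_row:
  assumes "p < 3 * (n - 1)"
  shows "(\<Sum>q<3 * (n - 1). Ap g n p q * stackX n x q)
       = (\<Sum>j<n - 1. companion g (n - 1) (p div 3) j * comp3 (x j) (p mod 3))"
proof -
  have "(\<Sum>q<3 * (n - 1). Ap g n p q * stackX n x q)
      = (\<Sum>j<n - 1. \<Sum>c<3. Ap g n p (3*j + c) * stackX n x (3*j + c))"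
    by (rule sum_lessThan_mult_3)
  also have "\<dots> = (\<Sum>j<n - 1. \<Sum>c<3.
      (if p mod 3 = c then companion g (n - 1) (p div 3) j * comp3 (x j) c else 0))"
    by (intro sum.cong refl) (simp add: Ap_def kron_I3_def stackX_block)
  finally show ?thesis by simp
qed

text \<open>The stacked filter state obeys \<open>X' = A X + B b\<close>: the companion rows shift the derivatives,
  and the last block row is the filter equation for \<open>x\<^sup>(\<^sup>n\<^sup>-\<^sup>1\<^sup>)\<close>.\<close>

lemma stackX_companion_dynamics:
  fixes g :: "nat \<Rightarrow> real" and x :: "nat \<Rightarrow> real^3"
  assumes n2: "n \<ge> 2"
    and top: "x (n - 1) = - (\<Sum>k=1..n - 1. g k *\<^sub>R x (n - k - 1)) + g n *\<^sub>R b"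
    and p: "p < 3 * (n - 1)"
  shows "comp3 (x (p div 3 + 1)) (p mod 3) =
         (\<Sum>q<3 * (n - 1). Ap g n p q * stackX n x q) + (\<Sum>k<3. Bp g n p k * comp3 b k)"
proof -
  define j c where "j = p div 3" and "c = p mod 3"
  have c3: "c < 3" by (simp add: c_def)
  have jn: "j < n - 1" using p by (simp add: j_def less_mult_imp_div_less mult.commute)
  show ?thesis
  proof (cases "j + 1 < n - 1")
    case True
    have "(\<Sum>j'<n - 1. companion g (n - 1) j j' * comp3 (x j') c) = comp3 (x (j+1)) c"
      using True by (simp add: companion_def if_distrib[of "\<lambda>z. z * _"] cong: if_cong)
    moreover have "(\<Sum>k<3. Bp g n p k * comp3 b k) = 0"
      using True by (simp add: Bp_def j_def)
    ultimately show ?thesis using Ap_stackX_row[OF p] by (simp add: j_def c_def)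
  next
    case False
    then have jj: "j = n - 2" using jn by simp
    have "(\<Sum>j'<n - 1. companion g (n - 1) j j' * comp3 (x j') c)
        = (\<Sum>j'<n - 1. - g (n - 1 - j') * comp3 (x j') c)"
      using False by (simp add: companion_def)
    also have "\<dots> = (\<Sum>k=1..n - 1. - g k * comp3 (x (n - k - 1)) c)"
      by (rule sum.reindex_bij_witness[of _ "\<lambda>k. n - 1 - k" "\<lambda>j'. n - 1 - j'"]) auto
    also have "\<dots> + g n * comp3 b c = comp3 (x (n - 1)) c"
      using c3 unfolding top by (simp add: comp3_add comp3_diff comp3_minus comp3_sum comp3_scaleR sum_negf)
    finally have A: "(\<Sum>j'<n - 1. companion g (n - 1) j j' * comp3 (x j') c) + g n * comp3 b c
        = comp3 (x (n - 1)) c" .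
    have "(\<Sum>k<3. Bp g n p k * comp3 b k) = g n * comp3 b c"
      using jj c3 unfolding Bp_def j_def[symmetric] c_def[symmetric]
      by (simp add: if_distrib[of "\<lambda>z. _ * z"] if_distrib[of "\<lambda>z. z * _"] sum.delta cong: if_cong)
    moreover have "j + 1 = n - 1" using jj n2 by simp
    ultimately show ?thesis using A Ap_stackX_row[OF p] by (simp add: j_def c_def)
  qed
qed

lemma diagonal_matrix_vector_mult:
  fixes M :: "real^'n^'n"
  assumes "\<forall>a b. a \<noteq> b \<longrightarrow> M $ a $ b = 0"
  shows "(M *v v) $ a = M $ a $ a * v $ a"
proof -
  have "(M *v v) $ a = (\<Sum>c\<in>UNIV. if c = a then M $ a $ a * v $ a else 0)"
    unfolding matrix_vector_mult_def vec_lambda_beta using assms by (intro sum.cong) auto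
  then show ?thesis by simp
qed

lemma diagonal_matrix_norm_le:
  fixes M :: "real^'n^'n"
  assumes "\<forall>a b. a \<noteq> b \<longrightarrow> M $ a $ b = 0" "\<forall>a. M $ a $ a \<ge> 0"
  shows "norm (M *v v) \<le> (\<Sum>a\<in>UNIV. M $ a $ a) * norm v"
proof -
  have "norm (M *v v) \<le> (\<Sum>a\<in>UNIV. \<bar>(M *v v) $ a\<bar>)" by (rule norm_le_l1_cart)
  also have "\<dots> \<le> (\<Sum>a\<in>UNIV. M $ a $ a * norm v)"
    using assms component_le_norm_cart
    by (intro sum_mono) (auto simp: diagonal_matrix_vector_mult abs_mult intro!: mult_left_mono)
  finally show ?thesis by (simp add: sum_distrib_right)
qed

lemma orthogonal_matrix_norm: "orthogonal_matrix (M::real^'n^'n) \<Longrightarrow> norm (M *v x) = norm x"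
  by (metis orthogonal_transformation_matrix orthogonal_transformation_norm
      matrix_vector_mul_linear matrix_of_matrix_vector_mul)

lemma SO3_norm_transpose_mult: "SO3 R \<Longrightarrow> norm (transpose R *v r) = norm r"
  by (metis SO3_def orthogonal_matrix_norm orthogonal_matrix_transpose)

lemma SO3_norm_cross_transpose:
  assumes "SO3 R"
  shows "norm (cross3 e (transpose R *v r)) = norm (cross3 (R *v e) r)"
proof -
  have o: "orthogonal_matrix R" using assms by (simp add: SO3_def)
  then have "R *v (transpose R *v r) = r"
    by (metis orthogonal_matrix_def matrix_vector_mul_assoc matrix_vector_mul_lid)
  moreover have "R *v cross3 e (transpose R *v r) = cross3 (R *v e) (R *v (transpose R *v r))"
    using cross_rotation_matrix assms by (simp add: SO3_def rotation_matrix_def)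
  ultimately show ?thesis using o by (metis orthogonal_matrix_norm)
qed

lemma norm_cross_le_mult:
  assumes "norm (a::real^3) \<le> A" "norm b \<le> B"
  shows "norm (cross3 a b) \<le> A * B"
proof -
  have "(norm (cross3 a b))\<^sup>2 \<le> (norm a * norm b)\<^sup>2"
    using norm_cross_dot[of a b] zero_le_power2[of "a \<bullet> b"] by linarith
  then have "norm (cross3 a b) \<le> norm a * norm b" by (rule power2_le_imp_le) simp
  also have "\<dots> \<le> A * B" using assms by (intro mult_mono) (auto intro: order_trans[OF norm_ge_zero])
  finally show ?thesis .
qed

lemma noncollinear_cross_coercive:
  fixes r1 r2 :: "real^3"
  assumes "\<not> collinear {0, r1, r2}"
  obtains B where "B > 0" "\<And>u. B * norm u \<le> norm (cross3 u r1) + norm (cross3 u r2)"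
proof -
  define f where "f u = (cross3 u r1, cross3 u r2)" for u
  have lf: "linear f"
    by (rule linearI) (simp_all add: f_def cross_add_left cross_mult_left)
  have "u = 0" if "f u = 0" for u
  proof (rule ccontr)
    assume u: "u \<noteq> 0"
    have "cross3 u r1 = 0" "cross3 u r2 = 0" using that by (auto simp: f_def zero_prod_def)
    then obtain a b where a: "r1 = 0 \<or> r1 = a *\<^sub>R u" and b: "r2 = 0 \<or> r2 = b *\<^sub>R u"
      using u unfolding cross_eq_0 collinear_lemma by blast
    have "collinear {0, r1, r2}"
      unfolding collinear_lemma
    proof (cases "r1 = 0 \<or> r2 = 0")
      case False
      then have "r1 = a *\<^sub>R u" "r2 = b *\<^sub>R u" "a \<noteq> 0" using a b by auto
      then have "r2 = (b / a) *\<^sub>R r1" by simp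
      then show "r1 = 0 \<or> r2 = 0 \<or> (\<exists>c. r2 = c *\<^sub>R r1)" by blast
    qed auto
    with assms show False by simp
  qed
  then have "inj f" using linear_injective_0[OF lf] by blast
  then obtain B where "B > 0" "\<And>u. B * norm u \<le> norm (f u)"
    using linear_inj_bounded_below_pos[OF lf] by blast
  then show ?thesis
    using that norm_Pair_le order_trans unfolding f_def by (metis (no_types, lifting))
qed

lemma transpose_skew_mult: "transpose (skew w) *v y = - cross3 w y"
  by (simp add: skew_def matrix_def transpose_def matrix_vector_mult_def cross3_def vec_eq_iff
      sum_3 axis_def forall_3)

lemma bounded_linear_transpose_mult: "bounded_linear (\<lambda>M::real^3^3. transpose M *v v)"
proof -
  have "linear (\<lambda>M::real^3^3. transpose M *v v)"
    by (rule linearI) (simp_all add: vec_eq_iff transpose_def matrix_vector_mult_def sum.distrib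
        algebra_simps sum_distrib_left)
  then show ?thesis by (simp add: linear_conv_bounded_linear)
qed

lemma finite_family_common_bound:
  assumes "\<forall>i<m. \<exists>B. Pr i B" and mono: "\<And>i B B'. Pr i B \<Longrightarrow> B \<le> B' \<Longrightarrow> Pr i B'"
  shows "\<exists>B. \<forall>i<m. Pr (i::nat) (B::real)"
proof -
  from assms(1) obtain Bf where Bf: "\<forall>i<m. Pr i (Bf i)" by metis
  have "Bf i \<le> (\<Sum>i<m. \<bar>Bf i\<bar>)" if "i < m" for i
  proof -
    have "\<bar>Bf i\<bar> \<le> (\<Sum>i<m. \<bar>Bf i\<bar>)" using that by (intro member_le_sum) auto
    then show ?thesis by linarith
  qed
  then show ?thesis using Bf mono by blast
qed

lemma hurwitz_coeffs_last_nonzero: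
  assumes "hurwitz_coeffs g d" "d \<ge> 1"
  shows "g d \<noteq> 0"
proof
  assume "g d = 0"
  have "(\<Sum>k=1..d. complex_of_real (g k) * (0::complex) ^ (d - k))
      = (\<Sum>k=1..d. if k = d then complex_of_real (g d) else 0)"
    by (rule sum.cong) (auto simp: power_0_left)
  also have "\<dots> = 0" using \<open>g d = 0\<close> assms(2) by simp
  finally have "(0::complex) ^ d + (\<Sum>k=1..d. complex_of_real (g k) * 0 ^ (d - k)) = 0"
    using assms(2) by simp
  then show False using assms(1) unfolding hurwitz_coeffs_def by fastforce
qed

lemma norm_filter_row_le:
  fixes x :: "nat \<Rightarrow> 'a::real_normed_vector"
  assumes "\<forall>k\<in>{1..d}. norm (x k) \<le> B" "norm v \<le> C"
  shows "norm (- (\<Sum>k=1..d. g k *\<^sub>R x k) + c *\<^sub>R v) \<le> (\<Sum>k=1..d. \<bar>g k\<bar> * B) + \<bar>c\<bar> * C"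
proof -
  have "norm (\<Sum>k=1..d. g k *\<^sub>R x k) \<le> (\<Sum>k=1..d. \<bar>g k\<bar> * B)"
    using assms(1) by (intro order_trans[OF norm_sum] sum_mono) (simp add: mult_left_mono)
  moreover have "norm (c *\<^sub>R v) \<le> \<bar>c\<bar> * C" using assms(2) by (simp add: mult_left_mono)
  moreover have "norm (- (\<Sum>k=1..d. g k *\<^sub>R x k) + c *\<^sub>R v)
      \<le> norm (\<Sum>k=1..d. g k *\<^sub>R x k) + norm (c *\<^sub>R v)"
    using norm_triangle_ineq[of "- (\<Sum>k=1..d. g k *\<^sub>R x k)" "c *\<^sub>R v"] by simp
  ultimately show ?thesis by linarith
qed

definition lyap_initial_gain :: "nat \<Rightarrow> nat \<Rightarrow> (nat \<Rightarrow> nat \<Rightarrow> nat \<Rightarrow> real) \<Rightarrow> real^3^3 \<Rightarrow> real" where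
  "lyap_initial_gain n m P Gam =
     (\<Sum>i<m. \<Sum>p<3 * (n - 1). \<Sum>q<3 * (n - 1). \<bar>P i p q\<bar>) + real m + (\<Sum>a\<in>UNIV. 1 / Gam$a$a)"

definition stability_gain :: "nat \<Rightarrow> nat \<Rightarrow> (nat \<Rightarrow> nat \<Rightarrow> nat \<Rightarrow> real) \<Rightarrow> real^3^3 \<Rightarrow> real" where
  "stability_gain n m P Gam = (1 + (\<Sum>a\<in>UNIV. sqrt (Gam$a$a))) * sqrt (lyap_initial_gain n m P Gam)"

lemma bounded_bilinear_cross3: "bounded_bilinear (cross3 :: real^3 \<Rightarrow> real^3 \<Rightarrow> real^3)"
  using bilinear_cross bilinear_conv_bounded_bilinear by blast

lemma error_rate_eq:
  fixes b bh om eta etah w :: "real^3"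
  shows "- cross3 (om - eta) b - (- cross3 (om - etah) bh + w)
       = - cross3 (om - eta) (b - bh) + cross3 (eta - etah) bh - w"
  by (simp add: cross3_simps)

text \<open>Pointwise form of the cancellation behind \<open>V' = -W\<close>: the correction \<open>w\<close>, the rotation
  terms and the bias update contribute nothing.\<close>

lemma lyapunov_cross_terms_cancel:
  fixes b bh om eta etah w :: "real^3"
  shows "(b - bh) \<bullet> w + (b - bh) \<bullet> (- cross3 (om - eta) b - (- cross3 (om - etah) bh + w))
         + (eta - etah) \<bullet> cross3 b bh = 0"
  by (simp add: cross3_simps)

locale attitude_filter =
  fixes n m :: nat
    and gam :: "nat \<Rightarrow> nat \<Rightarrow> real"
    and Gam :: "real^3^3"
    and P Q :: "nat \<Rightarrow> nat \<Rightarrow> nat \<Rightarrow> real"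
    and om_m :: "real \<Rightarrow> real^3"
    and eta :: "real^3"
    and r :: "nat \<Rightarrow> real^3"
    and R :: "real \<Rightarrow> real^3^3"
    and bh :: "nat \<Rightarrow> real \<Rightarrow> real^3"
    and etah :: "real \<Rightarrow> real^3"
    and xd :: "nat \<Rightarrow> nat \<Rightarrow> real \<Rightarrow> real^3"
  assumes n2: "n \<ge> 2"
    and gam_n_nonzero: "\<forall>i<m. gam i n \<noteq> 0"
    and Gam_diag: "\<forall>a b. a \<noteq> b \<longrightarrow> Gam $ a $ b = 0"
    and Gam_pos: "\<forall>a. Gam $ a $ a > 0"
    and Q_pd: "\<forall>i<m. posdef_on (3 * (n - 1)) (Q i)"
    and P_pd: "\<forall>i<m. posdef_on (3 * (n - 1)) (P i)"
    and P_lyap: "\<forall>i<m. lyap_eq (3 * (n - 1)) (Ap (gam i) n) (P i) (Q i)"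
    and om_bdd: "bounded (om_m ` {0..})"
    and solution: "is_solution n m gam Gam P om_m eta r R bh etah xd"
begin

abbreviation dimX :: nat where "dimX \<equiv> 3 * (n - 1)"

definition b :: "nat \<Rightarrow> real \<Rightarrow> real^3" where "b i t = meas R r i t"
definition b_err :: "nat \<Rightarrow> real \<Rightarrow> real^3" where "b_err i t = b i t - bh i t"
definition eta_err :: "real \<Rightarrow> real^3" where "eta_err t = eta - etah t"
definition X :: "nat \<Rightarrow> real \<Rightarrow> nat \<Rightarrow> real" where "X i t = stackX n (\<lambda>j. xd i j t)"
definition w_comp :: "nat \<Rightarrow> real \<Rightarrow> nat \<Rightarrow> real" where
  "w_comp i t k = (\<Sum>p<dimX. Bp (gam i) n p k * (\<Sum>q<dimX. P i p q * X i t q))"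
definition w :: "nat \<Rightarrow> real \<Rightarrow> real^3" where "w i t = corr_w (gam i) n (P i) (X i t)"
definition bh_rate :: "nat \<Rightarrow> real \<Rightarrow> real^3" where
  "bh_rate i t = - cross3 (om_m t - etah t) (bh i t) + w i t"
definition b_err_rate :: "nat \<Rightarrow> real \<Rightarrow> real^3" where
  "b_err_rate i t = - cross3 (om_m t - eta) (b i t) - bh_rate i t"
definition cross_sum :: "real \<Rightarrow> real^3" where
  "cross_sum t = (\<Sum>i<m. cross3 (b i t) (bh i t))"

definition V :: "real \<Rightarrow> real" where
  "V t = (\<Sum>i<m. quad_form dimX (P i) (X i t)) + (\<Sum>i<m. b_err i t \<bullet> b_err i t)
       + (\<Sum>a\<in>UNIV. (eta_err t $ a)\<^sup>2 / Gam$a$a)"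
definition W :: "real \<Rightarrow> real" where "W t = (\<Sum>i<m. quad_form dimX (Q i) (X i t))"

lemma R_SO3: "t \<ge> 0 \<Longrightarrow> SO3 (R t)"
  and R_deriv: "t \<ge> 0 \<Longrightarrow> (R has_vector_derivative (R t ** skew (om_m t - eta))) (at t within {0..})"
  and xd_deriv: "t \<ge> 0 \<Longrightarrow> i < m \<Longrightarrow> j < n - 1 \<Longrightarrow>
     (xd i j has_vector_derivative xd i (Suc j) t) (at t within {0..})"
  and xd_top: "t \<ge> 0 \<Longrightarrow> i < m \<Longrightarrow> xd i (n - 1) t =
     - (\<Sum>k=1..n - 1. gam i k *\<^sub>R xd i (n - k - 1) t) + gam i n *\<^sub>R b_err i t"
  and bh_deriv: "t \<ge> 0 \<Longrightarrow> i < m \<Longrightarrow> (bh i has_vector_derivative bh_rate i t) (at t within {0..})"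
  and etah_deriv: "t \<ge> 0 \<Longrightarrow>
     (etah has_vector_derivative (- (Gam *v cross_sum t))) (at t within {0..})"
  using solution
  unfolding is_solution_def b_err_def b_def bh_rate_def w_def X_def cross_sum_def by blast+

lemma b_deriv:
  assumes "t \<ge> 0"
  shows "(b i has_vector_derivative - cross3 (om_m t - eta) (b i t)) (at t within {0..})"
proof -
  have "((\<lambda>t. transpose (R t) *v r i) has_vector_derivative
      transpose (R t ** skew (om_m t - eta)) *v r i) (at t within {0..})"
    by (rule bounded_linear.has_vector_derivative[OF bounded_linear_transpose_mult R_deriv[OF assms]])
  moreover have "transpose (R t ** skew (om_m t - eta)) *v r i = - cross3 (om_m t - eta) (b i t)"
    unfolding matrix_transpose_mul matrix_vector_mul_assoc[symmetric] transpose_skew_mult b_def meas_def ..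
  ultimately show ?thesis unfolding b_def meas_def by simp
qed

lemma b_err_deriv: "t \<ge> 0 \<Longrightarrow> i < m \<Longrightarrow>
    (b_err i has_vector_derivative b_err_rate i t) (at t within {0..})"
  unfolding b_err_def[abs_def] b_err_rate_def by (intro derivative_intros b_deriv bh_deriv)

lemma eta_err_deriv: "t \<ge> 0 \<Longrightarrow>
    (eta_err has_vector_derivative Gam *v cross_sum t) (at t within {0..})"
  unfolding eta_err_def[abs_def]
  using has_vector_derivative_diff[OF has_vector_derivative_const etah_deriv] by simp

lemma b_err_rate_eq:
  "b_err_rate i t = - cross3 (om_m t - eta) (b_err i t) + cross3 (eta_err t) (bh i t) - w i t"
  unfolding b_err_rate_def bh_rate_def b_err_def eta_err_def by (rule error_rate_eq)

lemma X_eq: "p < dimX \<Longrightarrow> X i t p = comp3 (xd i (p div 3) t) (p mod 3)"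
  by (simp add: X_def stackX_def)

lemma xd_comp_eq_X: "j < n - 1 \<Longrightarrow> k < 3 \<Longrightarrow> comp3 (xd i j t) k = X i t (3*j + k)"
  by (subst X_eq) auto

lemma X_deriv:
  assumes "t \<ge> 0" "i < m" "p < dimX"
  shows "((\<lambda>t. X i t p) has_real_derivative comp3 (xd i (p div 3 + 1) t) (p mod 3))
    (at t within {0..})"
proof -
  have "p div 3 < n - 1" using assms(3) by (simp add: less_mult_imp_div_less mult.commute)
  then show ?thesis
    using has_real_derivative_comp3[OF _ xd_deriv[OF assms(1,2)]] X_eq[OF assms(3)] by simp
qed

lemma quad_form_P_deriv:
  assumes "t \<ge> 0" "i < m"
  shows "((\<lambda>t. quad_form dimX (P i) (X i t)) has_real_derivative
      - quad_form dimX (Q i) (X i t) + 2 * (\<Sum>k<3. comp3 (b_err i t) k * w_comp i t k))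
    (at t within {0..})"
proof -
  define x' where
    "x' p = (\<Sum>q<dimX. Ap (gam i) n p q * X i t q) + (\<Sum>k<3. Bp (gam i) n p k * comp3 (b_err i t) k)"
    for p
  have "\<forall>p<dimX. ((\<lambda>t. X i t p) has_real_derivative x' p) (at t within {0..})"
    using X_deriv[OF assms] stackX_companion_dynamics[OF n2 xd_top[OF assms]]
    by (simp add: x'_def X_def)
  note d = has_real_derivative_quad_form[OF this, of "P i"]
  have sym: "sym_on dimX (P i)" using P_pd assms(2) by (simp add: posdef_on_def)
  have "(\<Sum>p<dimX. \<Sum>q<dimX. x' p * P i p q * X i t q + X i t p * P i p q * x' q)
      = (\<Sum>p<dimX. \<Sum>q<dimX. (\<Sum>s<dimX. Ap (gam i) n p s * X i t s) * P i p q * X i t q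
           + X i t p * P i p q * (\<Sum>s<dimX. Ap (gam i) n q s * X i t s))
      + (\<Sum>p<dimX. \<Sum>q<dimX. (\<Sum>k<3. Bp (gam i) n p k * comp3 (b_err i t) k) * P i p q * X i t q
           + X i t p * P i p q * (\<Sum>k<3. Bp (gam i) n q k * comp3 (b_err i t) k))"
    unfolding x'_def by (simp add: sum.distrib[symmetric] algebra_simps)
  also have "\<dots> = - quad_form dimX (Q i) (X i t) + 2 * (\<Sum>k<3. comp3 (b_err i t) k * w_comp i t k)"
    unfolding lyap_eq_quad_form_derivative[OF P_lyap[rule_format, OF assms(2)]]
      sym_on_quad_form_cross_terms[OF sym] w_comp_def ..
  finally show ?thesis using d by simp
qed

lemma inner_b_err_w: "b_err i t \<bullet> w i t = (\<Sum>k<3. comp3 (b_err i t) k * w_comp i t k)"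
  by (simp add: w_def corr_w_def Let_def w_comp_def inner_vec_def sum_3 numeral_3_eq_3
      lessThan_Suc numeral_2_eq_2 comp3_def)

lemma V_deriv:
  assumes t: "t \<ge> 0"
  shows "(V has_real_derivative - W t) (at t within {0..})"
proof -
  have d1: "((\<lambda>t. \<Sum>i<m. quad_form dimX (P i) (X i t)) has_real_derivative
     (\<Sum>i<m. - quad_form dimX (Q i) (X i t) + 2 * (b_err i t \<bullet> w i t))) (at t within {0..})"
    using quad_form_P_deriv[OF t] by (intro DERIV_sum) (simp add: inner_b_err_w)
  have d2: "((\<lambda>t. \<Sum>i<m. b_err i t \<bullet> b_err i t) has_real_derivative
     (\<Sum>i<m. 2 * (b_err i t \<bullet> b_err_rate i t))) (at t within {0..})"
  proof (intro DERIV_sum)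
    fix i assume "i \<in> {..<m}"
    with b_err_deriv[OF t] have "(b_err i has_vector_derivative b_err_rate i t) (at t within {0..})"
      by simp
    from bounded_bilinear.has_vector_derivative[OF bounded_bilinear_inner this this]
    show "((\<lambda>t. b_err i t \<bullet> b_err i t) has_real_derivative 2 * (b_err i t \<bullet> b_err_rate i t))
        (at t within {0..})"
      by (simp add: has_real_derivative_iff_has_vector_derivative inner_commute)
  qed
  have d3: "((\<lambda>t. \<Sum>a\<in>UNIV. (eta_err t $ a)\<^sup>2 / Gam$a$a) has_real_derivative
      (\<Sum>a\<in>UNIV. 2 * (eta_err t $ a * cross_sum t $ a))) (at t within {0..})"
  proof (intro DERIV_sum)
    fix a :: 3
    have g: "Gam$a$a > 0" using Gam_pos by blast
    have "((\<lambda>t. eta_err t $ a) has_real_derivative (Gam *v cross_sum t) $ a) (at t within {0..})"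
      using bounded_linear.has_vector_derivative[OF bounded_linear_vec_nth eta_err_deriv[OF t]]
      by (simp add: has_real_derivative_iff_has_vector_derivative)
    then have "((\<lambda>t. (eta_err t $ a)\<^sup>2 / Gam$a$a) has_real_derivative
        (2 * eta_err t $ a * (Gam *v cross_sum t) $ a) / Gam$a$a) (at t within {0..})"
      using g by (auto intro!: derivative_eq_intros)
    then show "((\<lambda>t. (eta_err t $ a)\<^sup>2 / Gam$a$a) has_real_derivative
        2 * (eta_err t $ a * cross_sum t $ a)) (at t within {0..})"
      using g by (simp add: diagonal_matrix_vector_mult[OF Gam_diag])
  qed
  have cancel: "- quad_form dimX (Q i) (X i t) + 2 * (b_err i t \<bullet> w i t)
      + 2 * (b_err i t \<bullet> b_err_rate i t) + 2 * (eta_err t \<bullet> cross3 (b i t) (bh i t))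
      = - quad_form dimX (Q i) (X i t)" for i
    using lyapunov_cross_terms_cancel[of "b i t" "bh i t" "w i t" "om_m t" eta "etah t"]
    unfolding b_err_def eta_err_def b_err_rate_def bh_rate_def by linarith
  have "(\<Sum>a\<in>UNIV. 2 * (eta_err t $ a * cross_sum t $ a))
      = (\<Sum>i<m. 2 * (eta_err t \<bullet> cross3 (b i t) (bh i t)))"
    by (simp add: cross_sum_def inner_sum_right inner_vec_def sum_distrib_left sum.swap[of _ UNIV])
  then have "(\<Sum>i<m. - quad_form dimX (Q i) (X i t) + 2 * (b_err i t \<bullet> w i t))
      + (\<Sum>i<m. 2 * (b_err i t \<bullet> b_err_rate i t))
      + (\<Sum>a\<in>UNIV. 2 * (eta_err t $ a * cross_sum t $ a))
      = (\<Sum>i<m. - quad_form dimX (Q i) (X i t) + 2 * (b_err i t \<bullet> w i t)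
          + 2 * (b_err i t \<bullet> b_err_rate i t) + 2 * (eta_err t \<bullet> cross3 (b i t) (bh i t)))"
    by (simp only: sum.distrib)
  also have "\<dots> = - W t"
    unfolding W_def sum_negf[symmetric] by (rule sum.cong[OF refl cancel])
  finally show ?thesis
    using DERIV_add[OF DERIV_add[OF d1 d2] d3] unfolding V_def[abs_def] by simp
qed

lemma W_nonneg: "W t \<ge> 0"
  unfolding W_def using Q_pd by (intro sum_nonneg) (simp add: quad_form_nonneg)

lemma quad_form_Q_le_W: "i < m \<Longrightarrow> quad_form dimX (Q i) (X i t) \<le> W t"
  unfolding W_def using Q_pd by (intro member_le_sum) (auto simp: quad_form_nonneg)

lemma V_summands_nonneg:
  shows "(\<Sum>i<m. quad_form dimX (P i) (X i t)) \<ge> 0"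
    and "(\<Sum>i<m. b_err i t \<bullet> b_err i t) \<ge> 0"
    and "(\<Sum>a\<in>UNIV. (eta_err t $ a)\<^sup>2 / Gam$a$a) \<ge> 0"
  using P_pd Gam_pos by (auto intro!: sum_nonneg simp: quad_form_nonneg less_imp_le)

lemma V_nonneg: "V t \<ge> 0"
  unfolding V_def using V_summands_nonneg[of t] by linarith

lemma quad_form_P_le_V: "i < m \<Longrightarrow> quad_form dimX (P i) (X i t) \<le> V t"
  using member_le_sum[of i "{..<m}" "\<lambda>i. quad_form dimX (P i) (X i t)"] P_pd
    V_summands_nonneg[of t] unfolding V_def by (auto simp: quad_form_nonneg)

lemma b_err_sq_le_V: "i < m \<Longrightarrow> b_err i t \<bullet> b_err i t \<le> V t"
  using member_le_sum[of i "{..<m}" "\<lambda>i. b_err i t \<bullet> b_err i t"]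
    V_summands_nonneg[of t] unfolding V_def by auto

lemma eta_err_sq_le_V: "(eta_err t $ a)\<^sup>2 / Gam$a$a \<le> V t"
  using member_le_sum[of a UNIV "\<lambda>a. (eta_err t $ a)\<^sup>2 / Gam$a$a"] Gam_pos
    V_summands_nonneg[of t] unfolding V_def by (auto simp: less_imp_le)

lemma V_antimono: assumes "0 \<le> s" "s \<le> t" shows "V t \<le> V s"
proof -
  obtain x where "x \<in> {s..t}" "V t - V s = - W x * (t - s)"
    using mvt_within_atLeast[OF assms, of V "\<lambda>t. - W t"] V_deriv by blast
  moreover have "W x * (t - s) \<ge> 0" using W_nonneg assms by simp
  ultimately show ?thesis by linarith
qed

lemma V_le_V0: "t \<ge> 0 \<Longrightarrow> V t \<le> V 0"
  using V_antimono[of 0 t] by simp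

lemma V_convergent: "\<exists>L. (V \<longlongrightarrow> L) at_top"
proof -
  define L where "L = Inf (V ` {0..})"
  have bdd: "bdd_below (V ` {0..})" using V_nonneg by (auto intro!: bdd_belowI[of _ 0])
  have "(V \<longlongrightarrow> L) at_top"
  proof (rule tendstoI)
    fix e :: real assume "e > 0"
    then obtain s where s: "s \<ge> 0" "V s < L + e"
      using cInf_lessD[of "V ` {0..}" "L + e"] unfolding L_def by auto
    have "L \<le> V t" if "t \<ge> 0" for t
      unfolding L_def using that by (intro cInf_lower[OF _ bdd]) auto
    then show "eventually (\<lambda>t. dist (V t) L < e) at_top"
      unfolding eventually_at_top_linorder dist_real_def
      using s V_antimono by (intro exI[of _ s]) (smt (verit))
  qed
  then show ?thesis by blast
qed

lemma norm_b_err_le: "t \<ge> 0 \<Longrightarrow> i < m \<Longrightarrow> norm (b_err i t) \<le> sqrt (V 0)"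
  using b_err_sq_le_V[of i t] V_le_V0[of t] by (simp add: norm_eq_sqrt_inner)

lemma abs_eta_err_le: "t \<ge> 0 \<Longrightarrow> \<bar>eta_err t $ a\<bar> \<le> sqrt (Gam$a$a * V 0)"
proof -
  assume t: "t \<ge> 0"
  have "Gam$a$a > 0" using Gam_pos by blast
  moreover have "(eta_err t $ a)\<^sup>2 / Gam$a$a \<le> V 0"
    using eta_err_sq_le_V[of t a] V_le_V0[OF t] by linarith
  ultimately have "(eta_err t $ a)\<^sup>2 \<le> Gam$a$a * V 0" by (simp add: divide_le_eq mult.commute)
  then show ?thesis by (metis real_sqrt_abs real_sqrt_le_mono)
qed

definition eta_err_bound :: real where "eta_err_bound = (\<Sum>a\<in>UNIV. sqrt (Gam$a$a * V 0))"

lemma norm_eta_err_le: "t \<ge> 0 \<Longrightarrow> norm (eta_err t) \<le> eta_err_bound"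
  unfolding eta_err_bound_def
  by (rule order_trans[OF norm_le_l1_cart sum_mono[OF abs_eta_err_le]])

lemma norm_w_le: "norm (w i t) \<le> \<bar>w_comp i t 0\<bar> + \<bar>w_comp i t 1\<bar> + \<bar>w_comp i t 2\<bar>"
  using norm_le_l1_cart[of "w i t"]
  by (simp add: w_def corr_w_def Let_def w_comp_def sum_3)

lemma X_bounded: obtains B where "\<forall>i<m. \<forall>t\<ge>0. \<forall>p<dimX. \<bar>X i t p\<bar> \<le> B"
proof -
  have "\<exists>B. \<forall>i<m. \<forall>t\<ge>0. \<forall>p<dimX. \<bar>X i t p\<bar> \<le> B"
  proof (rule finite_family_common_bound, intro allI impI)
    fix i assume i: "i < m"
    obtain c where c: "c > 0" "\<And>v. c * (\<Sum>p<dimX. (v p)\<^sup>2) \<le> quad_form dimX (P i) v"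
      using posdef_on_coercive P_pd i by blast
    have "\<bar>X i t p\<bar> \<le> sqrt (V 0 / c)" if "t \<ge> 0" "p < dimX" for t p
    proof -
      have "c * (X i t p)\<^sup>2 \<le> c * (\<Sum>q<dimX. (X i t q)\<^sup>2)"
        using c(1) square_le_sum_squares[OF that(2)] by simp
      also have "\<dots> \<le> V 0"
        using c(2)[of "X i t"] quad_form_P_le_V[OF i, of t] V_le_V0[OF that(1)] by linarith
      finally have "(X i t p)\<^sup>2 \<le> V 0 / c" using c(1) by (simp add: le_divide_eq mult.commute)
      then show ?thesis by (metis real_sqrt_abs real_sqrt_le_mono)
    qed
    then show "\<exists>B. \<forall>t\<ge>0. \<forall>p<dimX. \<bar>X i t p\<bar> \<le> B" by blast
  qed (meson order_trans)
  then show ?thesis using that by blast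
qed

lemma xd_bounded: obtains B where "\<forall>i<m. \<forall>t\<ge>0. \<forall>j<n. norm (xd i j t) \<le> B"
proof -
  obtain BX where BX: "\<forall>i<m. \<forall>t\<ge>0. \<forall>p<dimX. \<bar>X i t p\<bar> \<le> BX" using X_bounded by blast
  have low: "norm (xd i j t) \<le> 3 * BX" if "i < m" "t \<ge> 0" "j < n - 1" for i t j
  proof -
    have "\<bar>comp3 (xd i j t) k\<bar> \<le> BX" if "k < 3" for k
      using BX \<open>i < m\<close> \<open>t \<ge> 0\<close> \<open>j < n - 1\<close> that xd_comp_eq_X[OF \<open>j < n - 1\<close> that] by auto
    then have "\<bar>comp3 (xd i j t) 0\<bar> \<le> BX" "\<bar>comp3 (xd i j t) 1\<bar> \<le> BX"
      "\<bar>comp3 (xd i j t) 2\<bar> \<le> BX" by auto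
    then show ?thesis using norm_le_comp3[of "xd i j t"] by linarith
  qed
  have "\<exists>B. \<forall>i<m. \<forall>t\<ge>0. \<forall>j<n. norm (xd i j t) \<le> B"
  proof (rule finite_family_common_bound, intro allI impI)
    fix i assume i: "i < m"
    define C where "C = (\<Sum>k=1..n - 1. \<bar>gam i k\<bar> * (3 * BX)) + \<bar>gam i n\<bar> * sqrt (V 0)"
    have "norm (xd i j t) \<le> \<bar>3 * BX\<bar> + \<bar>C\<bar>" if t: "t \<ge> 0" and j: "j < n" for t j
    proof (cases "j < n - 1")
      case True then show ?thesis using low[OF i t True] by linarith
    next
      case False
      then have "j = n - 1" using j by simp
      moreover have "norm (xd i (n - 1) t) \<le> C"
        unfolding xd_top[OF t i] C_def
        by (intro norm_filter_row_le ballI low[OF i t] norm_b_err_le[OF t i]) auto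
      ultimately have "norm (xd i j t) \<le> C" by simp
      then show ?thesis by linarith
    qed
    then show "\<exists>B. \<forall>t\<ge>0. \<forall>j<n. norm (xd i j t) \<le> B" by blast
  qed (meson order_trans)
  then show ?thesis using that by blast
qed

lemma w_bounded: obtains B where "\<forall>i<m. \<forall>t\<ge>0. norm (w i t) \<le> B"
proof -
  obtain BX where BX: "\<forall>i<m. \<forall>t\<ge>0. \<forall>p<dimX. \<bar>X i t p\<bar> \<le> BX" using X_bounded by blast
  have "\<exists>B. \<forall>i<m. \<forall>t\<ge>0. norm (w i t) \<le> B"
  proof (rule finite_family_common_bound, intro allI impI)
    fix i assume i: "i < m"
    define C where "C k = (\<Sum>p<dimX. \<bar>Bp (gam i) n p k\<bar> * (\<Sum>q<dimX. \<bar>P i p q\<bar> * BX))" for k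
    have wk: "\<bar>w_comp i t k\<bar> \<le> C k" if "t \<ge> 0" for t k
      unfolding w_comp_def C_def by (rule linear_form_abs_bound) (use BX i that in auto)
    have "norm (w i t) \<le> C 0 + C 1 + C 2" if "t \<ge> 0" for t
      using norm_w_le[of i t] wk[OF that, of 0] wk[OF that, of 1] wk[OF that, of 2] by linarith
    then show "\<exists>B. \<forall>t\<ge>0. norm (w i t) \<le> B" by blast
  qed (meson order_trans)
  then show ?thesis using that by blast
qed

lemma om_bounded: obtains B where "\<forall>t\<ge>0. norm (om_m t) \<le> B"
  using om_bdd unfolding bounded_iff by auto

lemma norm_b: "t \<ge> 0 \<Longrightarrow> norm (b i t) = norm (r i)"
  unfolding b_def meas_def using SO3_norm_transpose_mult[OF R_SO3] by simp

lemma norm_bh_le: "t \<ge> 0 \<Longrightarrow> i < m \<Longrightarrow> norm (bh i t) \<le> norm (r i) + sqrt (V 0)"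
  using norm_triangle_ineq4[of "b i t" "b_err i t"] norm_b[of t i] norm_b_err_le[of t i]
  by (simp add: b_err_def)

lemma norm_etah_le: "t \<ge> 0 \<Longrightarrow> norm (etah t) \<le> norm eta + eta_err_bound"
  using norm_triangle_ineq4[of eta "eta_err t"] norm_eta_err_le[of t] by (simp add: eta_err_def)

lemma bh_rate_bounded: obtains B where "\<forall>i<m. \<forall>t\<ge>0. norm (bh_rate i t) \<le> B"
proof -
  obtain BO where BO: "\<forall>t\<ge>0. norm (om_m t) \<le> BO" using om_bounded by blast
  obtain BW where BW: "\<forall>i<m. \<forall>t\<ge>0. norm (w i t) \<le> BW" using w_bounded by blast
  define Br where "Br = (\<Sum>i<m. norm (r i))"
  have "norm (bh_rate i t) \<le> (BO + norm eta + eta_err_bound) * (Br + sqrt (V 0)) + BW"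
    if "i < m" "t \<ge> 0" for i t
  proof -
    have "norm (om_m t - etah t) \<le> BO + norm eta + eta_err_bound"
      using BO that norm_triangle_ineq4[of "om_m t" "etah t"] norm_etah_le[of t] by auto
    moreover have "norm (r i) \<le> Br"
      unfolding Br_def using that by (intro member_le_sum) auto
    then have "norm (bh i t) \<le> Br + sqrt (V 0)" using norm_bh_le[of t i] that by linarith
    ultimately have "norm (cross3 (om_m t - etah t) (bh i t))
        \<le> (BO + norm eta + eta_err_bound) * (Br + sqrt (V 0))"
      by (rule norm_cross_le_mult)
    moreover have "norm (bh_rate i t) \<le> norm (cross3 (om_m t - etah t) (bh i t)) + norm (w i t)"
      using norm_triangle_ineq[of "- cross3 (om_m t - etah t) (bh i t)" "w i t"]
      unfolding bh_rate_def by simp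
    ultimately show ?thesis using BW that by force
  qed
  then show ?thesis using that by blast
qed

lemma b_err_rate_bounded: obtains B where "\<forall>i<m. \<forall>t\<ge>0. norm (b_err_rate i t) \<le> B"
proof -
  obtain BO where BO: "\<forall>t\<ge>0. norm (om_m t) \<le> BO" using om_bounded by blast
  obtain BH where BH: "\<forall>i<m. \<forall>t\<ge>0. norm (bh_rate i t) \<le> BH" using bh_rate_bounded by blast
  define Br where "Br = (\<Sum>i<m. norm (r i))"
  have "norm (b_err_rate i t) \<le> (BO + norm eta) * Br + BH" if "i < m" "t \<ge> 0" for i t
  proof -
    have "norm (om_m t - eta) \<le> BO + norm eta"
      using BO that norm_triangle_ineq4[of "om_m t" eta] by auto
    moreover have "norm (b i t) \<le> Br"
      unfolding Br_def norm_b[OF that(2)] using that by (intro member_le_sum) auto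
    ultimately have "norm (cross3 (om_m t - eta) (b i t)) \<le> (BO + norm eta) * Br"
      by (rule norm_cross_le_mult)
    moreover have "norm (b_err_rate i t) \<le> norm (cross3 (om_m t - eta) (b i t)) + norm (bh_rate i t)"
      using norm_triangle_ineq4[of "- cross3 (om_m t - eta) (b i t)" "bh_rate i t"]
      unfolding b_err_rate_def by simp
    ultimately show ?thesis using BH that by force
  qed
  then show ?thesis using that by blast
qed

definition W_rate :: "real \<Rightarrow> real" where
  "W_rate t = (\<Sum>i<m. \<Sum>p<dimX. \<Sum>q<dimX.
     comp3 (xd i (p div 3 + 1) t) (p mod 3) * Q i p q * X i t q
     + X i t p * Q i p q * comp3 (xd i (q div 3 + 1) t) (q mod 3))"

lemma W_deriv: "t \<ge> 0 \<Longrightarrow> (W has_real_derivative W_rate t) (at t within {0..})"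
  unfolding W_def[abs_def] W_rate_def
  by (intro DERIV_sum has_real_derivative_quad_form allI impI X_deriv) auto

lemma W_rate_bounded: obtains M where "\<forall>t\<ge>0. \<bar>W_rate t\<bar> \<le> M"
proof -
  obtain BX where BX: "\<forall>i<m. \<forall>t\<ge>0. \<forall>p<dimX. \<bar>X i t p\<bar> \<le> BX" using X_bounded by blast
  obtain BD where BD: "\<forall>i<m. \<forall>t\<ge>0. \<forall>j<n. norm (xd i j t) \<le> BD" using xd_bounded by blast
  define B where "B = \<bar>BX\<bar> + \<bar>BD\<bar>"
  have "\<bar>W_rate t\<bar> \<le> (\<Sum>i<m. \<Sum>p<dimX. \<Sum>q<dimX. 2 * (B * \<bar>Q i p q\<bar> * B))" if t: "t \<ge> 0" for t
    unfolding W_rate_def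
  proof (rule order_trans[OF sum_abs sum_mono])
    fix i assume i: "i \<in> {..<m}"
    have X: "\<forall>p<dimX. \<bar>X i t p\<bar> \<le> B"
      using BX i t unfolding B_def by (meson abs_ge_self add_increasing2 abs_ge_zero lessThan_iff order_trans)
    have "\<bar>comp3 (xd i (p div 3 + 1) t) (p mod 3)\<bar> \<le> B" if "p < dimX" for p
    proof -
      have "p div 3 + 1 < n" using that n2 by (simp add: less_mult_imp_div_less mult.commute)
      then have "norm (xd i (p div 3 + 1) t) \<le> BD" using BD i t by auto
      moreover have "\<bar>comp3 (xd i (p div 3 + 1) t) (p mod 3)\<bar> \<le> norm (xd i (p div 3 + 1) t)"
        by (rule comp3_le_norm) simp
      ultimately show ?thesis unfolding B_def by linarith
    qed
    then show "\<bar>\<Sum>p<dimX. \<Sum>q<dimX. comp3 (xd i (p div 3 + 1) t) (p mod 3) * Q i p q * X i t q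
        + X i t p * Q i p q * comp3 (xd i (q div 3 + 1) t) (q mod 3)\<bar>
        \<le> (\<Sum>p<dimX. \<Sum>q<dimX. 2 * (B * \<bar>Q i p q\<bar> * B))"
      using quad_form_derivative_bound[OF X, of "\<lambda>p. comp3 (xd i (p div 3 + 1) t) (p mod 3)" "Q i"]
      by blast
  qed
  then show ?thesis using that by blast
qed

lemma W_tendsto_zero: "(W \<longlongrightarrow> 0) at_top"
proof -
  obtain L where L: "(V \<longlongrightarrow> L) at_top" using V_convergent by blast
  obtain M where M: "\<forall>t\<ge>0. \<bar>W_rate t\<bar> \<le> M" using W_rate_bounded by blast
  have "((\<lambda>t. - W t) \<longlongrightarrow> 0) at_top"
  proof (rule barbalat[OF _ _ _ tendsto_const L])
    show "\<forall>t\<ge>0. (V has_real_derivative - W t + 0) (at t within {0..})"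
      using V_deriv by simp
    show "\<forall>t\<ge>0. ((\<lambda>t. - W t) has_real_derivative - W_rate t) (at t within {0..})"
      using W_deriv by (auto intro!: derivative_eq_intros)
    show "\<forall>t\<ge>0. \<bar>- W_rate t\<bar> \<le> M" using M by simp
  qed
  then show ?thesis using tendsto_minus[of "\<lambda>t. - W t" 0 at_top] by simp
qed

lemma X_tendsto_zero:
  assumes i: "i < m" and p: "p < dimX"
  shows "((\<lambda>t. X i t p) \<longlongrightarrow> 0) at_top"
proof -
  obtain c where c: "c > 0" "\<And>v. c * (\<Sum>p<dimX. (v p)\<^sup>2) \<le> quad_form dimX (Q i) v"
    using posdef_on_coercive Q_pd i by blast
  have "norm (X i t p) \<le> sqrt (W t / c)" for t
  proof -
    have "c * (X i t p)\<^sup>2 \<le> c * (\<Sum>q<dimX. (X i t q)\<^sup>2)"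
      using c(1) square_le_sum_squares[OF p] by simp
    also have "\<dots> \<le> W t" using c(2)[of "X i t"] quad_form_Q_le_W[OF i, of t] by linarith
    finally have "(X i t p)\<^sup>2 \<le> W t / c" using c(1) by (simp add: le_divide_eq mult.commute)
    then show ?thesis by (metis real_norm_def real_sqrt_abs real_sqrt_le_mono)
  qed
  moreover have "((\<lambda>t. sqrt (W t / c)) \<longlongrightarrow> 0) at_top"
    using tendsto_real_sqrt[OF tendsto_divide[OF W_tendsto_zero tendsto_const, of c]] c(1) by simp
  ultimately show ?thesis
    by (intro Lim_null_comparison[of "\<lambda>t. X i t p" "\<lambda>t. sqrt (W t / c)"]) auto
qed

lemma xd_tendsto_zero:
  assumes "i < m" "j < n - 1"
  shows "(xd i j \<longlongrightarrow> 0) at_top"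
proof (rule Lim_null_comparison)
  have "norm (xd i j t) \<le> \<bar>X i t (3*j)\<bar> + \<bar>X i t (3*j + 1)\<bar> + \<bar>X i t (3*j + 2)\<bar>" for t
    using norm_le_comp3[of "xd i j t"] xd_comp_eq_X[OF assms(2), of 0 i t]
      xd_comp_eq_X[OF assms(2), of 1 i t] xd_comp_eq_X[OF assms(2), of 2 i t] by simp
  then show "eventually (\<lambda>t. norm (xd i j t)
      \<le> \<bar>X i t (3*j)\<bar> + \<bar>X i t (3*j + 1)\<bar> + \<bar>X i t (3*j + 2)\<bar>) at_top"
    by simp
  show "((\<lambda>t. \<bar>X i t (3*j)\<bar> + \<bar>X i t (3*j + 1)\<bar> + \<bar>X i t (3*j + 2)\<bar>) \<longlongrightarrow> 0) at_top"
    using assms by (intro tendsto_add_zero tendsto_rabs_zero X_tendsto_zero) auto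
qed

definition filter_rhs :: "nat \<Rightarrow> real \<Rightarrow> real^3" where
  "filter_rhs i t = - (\<Sum>k=1..n - 1. gam i k *\<^sub>R xd i (n - k - 1) t) + gam i n *\<^sub>R b_err i t"

definition filter_rhs_rate :: "nat \<Rightarrow> real \<Rightarrow> real^3" where
  "filter_rhs_rate i t = - (\<Sum>k=1..n - 1. gam i k *\<^sub>R xd i (n - k) t) + gam i n *\<^sub>R b_err_rate i t"

lemma filter_rhs_deriv:
  assumes t: "t \<ge> 0" and i: "i < m"
  shows "(filter_rhs i has_vector_derivative filter_rhs_rate i t) (at t within {0..})"
proof -
  have "(xd i (n - k - 1) has_vector_derivative xd i (n - k) t) (at t within {0..})"
    if "k \<in> {1..n - 1}" for k
  proof -
    have "n - k - 1 < n - 1" "Suc (n - k - 1) = n - k" using that by auto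
    then show ?thesis using xd_deriv[OF t i, of "n - k - 1"] by simp
  qed
  then show ?thesis
    unfolding filter_rhs_def[abs_def] filter_rhs_rate_def
    by (intro derivative_intros bounded_linear.has_vector_derivative[OF bounded_linear_scaleR_right]
        b_err_deriv[OF t i]) auto
qed

lemma filter_rhs_rate_bounded:
  assumes "i < m"
  obtains B where "\<forall>t\<ge>0. norm (filter_rhs_rate i t) \<le> B"
proof -
  obtain BD where BD: "\<forall>i<m. \<forall>t\<ge>0. \<forall>j<n. norm (xd i j t) \<le> BD" using xd_bounded by blast
  obtain BB where BB: "\<forall>i<m. \<forall>t\<ge>0. norm (b_err_rate i t) \<le> BB" using b_err_rate_bounded by blast
  have "norm (filter_rhs_rate i t) \<le> (\<Sum>k=1..n - 1. \<bar>gam i k\<bar> * BD) + \<bar>gam i n\<bar> * BB"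
    if "t \<ge> 0" for t
    unfolding filter_rhs_rate_def using BD BB assms that
    by (intro norm_filter_row_le ballI) auto
  then show ?thesis using that by blast
qed

lemma b_err_tendsto_zero:
  assumes i: "i < m"
  shows "(b_err i \<longlongrightarrow> 0) at_top"
proof -
  obtain B where B: "\<forall>t\<ge>0. norm (filter_rhs_rate i t) \<le> B" using filter_rhs_rate_bounded[OF i] .
  have nn: "n - 2 < n - 1" "Suc (n - 2) = n - 1" using n2 by auto
  have "\<forall>t\<ge>0. (xd i (n - 2) has_vector_derivative filter_rhs i t + 0) (at t within {0..})"
  proof (intro allI impI)
    fix t :: real assume t: "t \<ge> 0"
    show "(xd i (n - 2) has_vector_derivative filter_rhs i t + 0) (at t within {0..})"
      using xd_deriv[OF t i nn(1)] xd_top[OF t i] unfolding nn(2) filter_rhs_def by simp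
  qed
  moreover have "\<forall>t\<ge>0. (filter_rhs i has_vector_derivative filter_rhs_rate i t) (at t within {0..})"
    using filter_rhs_deriv[OF _ i] by blast
  ultimately have rhs: "(filter_rhs i \<longlongrightarrow> 0) at_top"
    using barbalat_vec[OF _ _ B tendsto_const xd_tendsto_zero[OF i nn(1)]] by blast
  have "gam i n \<noteq> 0" using gam_n_nonzero i by blast
  then have "b_err i = (\<lambda>t. inverse (gam i n) *\<^sub>R
      (filter_rhs i t + (\<Sum>k=1..n - 1. gam i k *\<^sub>R xd i (n - k - 1) t)))"
    by (intro ext) (simp add: filter_rhs_def)
  moreover have "((\<lambda>t. inverse (gam i n) *\<^sub>R
      (filter_rhs i t + (\<Sum>k=1..n - 1. gam i k *\<^sub>R xd i (n - k - 1) t))) \<longlongrightarrow>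
      inverse (gam i n) *\<^sub>R (0 + (\<Sum>k=1..n - 1. gam i k *\<^sub>R 0))) at_top"
    using i by (intro tendsto_intros rhs xd_tendsto_zero) auto
  ultimately show ?thesis by simp
qed

lemma w_tendsto_zero:
  assumes i: "i < m"
  shows "(w i \<longlongrightarrow> 0) at_top"
proof (rule Lim_null_comparison[OF always_eventually[OF allI[OF norm_w_le]]])
  have "((\<lambda>t. w_comp i t k) \<longlongrightarrow> (\<Sum>p<dimX. Bp (gam i) n p k * (\<Sum>q<dimX. P i p q * 0))) at_top"
    for k unfolding w_comp_def by (intro tendsto_intros X_tendsto_zero[OF i]) auto
  then show "((\<lambda>t. \<bar>w_comp i t 0\<bar> + \<bar>w_comp i t 1\<bar> + \<bar>w_comp i t 2\<bar>) \<longlongrightarrow> 0) at_top"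
    by (intro tendsto_add_zero tendsto_rabs_zero) simp_all
qed

lemma cross_sum_bounded: obtains B where "\<forall>t\<ge>0. norm (cross_sum t) \<le> B"
proof -
  have "norm (cross_sum t) \<le> (\<Sum>i<m. norm (r i) * (norm (r i) + sqrt (V 0)))" if t: "t \<ge> 0" for t
    unfolding cross_sum_def
  proof (rule order_trans[OF norm_sum sum_mono])
    fix i assume "i \<in> {..<m}"
    then show "norm (cross3 (b i t) (bh i t)) \<le> norm (r i) * (norm (r i) + sqrt (V 0))"
      using norm_cross_le_mult[OF eq_refl[OF norm_b[OF t]] norm_bh_le[OF t]] by simp
  qed
  then show ?thesis using that by blast
qed

lemma cross_err_rate_bounded:
  assumes i: "i < m"
  obtains M where "\<forall>t\<ge>0.
    norm (cross3 (eta_err t) (bh_rate i t) + cross3 (Gam *v cross_sum t) (bh i t)) \<le> M"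
proof -
  obtain BH where BH: "\<forall>i<m. \<forall>t\<ge>0. norm (bh_rate i t) \<le> BH" using bh_rate_bounded by blast
  obtain BS where BS: "\<forall>t\<ge>0. norm (cross_sum t) \<le> BS" using cross_sum_bounded by blast
  define G where "G = (\<Sum>a\<in>UNIV. Gam$a$a)"
  have "norm (cross3 (eta_err t) (bh_rate i t) + cross3 (Gam *v cross_sum t) (bh i t))
      \<le> eta_err_bound * BH + G * BS * (norm (r i) + sqrt (V 0))" if t: "t \<ge> 0" for t
  proof -
    have "norm (Gam *v cross_sum t) \<le> G * norm (cross_sum t)"
      unfolding G_def using Gam_diag Gam_pos by (intro diagonal_matrix_norm_le) (auto intro: less_imp_le)
    also have "\<dots> \<le> G * BS"
      using BS t Gam_pos unfolding G_def by (intro mult_left_mono sum_nonneg) (auto intro: less_imp_le)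
    finally have "norm (cross3 (Gam *v cross_sum t) (bh i t)) \<le> G * BS * (norm (r i) + sqrt (V 0))"
      using norm_bh_le[OF t i] by (rule norm_cross_le_mult)
    moreover have "norm (cross3 (eta_err t) (bh_rate i t)) \<le> eta_err_bound * BH"
      using norm_eta_err_le[OF t] BH i t by (intro norm_cross_le_mult) auto
    moreover note norm_triangle_ineq[of "cross3 (eta_err t) (bh_rate i t)"
        "cross3 (Gam *v cross_sum t) (bh i t)"]
    ultimately show ?thesis by linarith
  qed
  then show ?thesis using that by blast
qed

text \<open>Once \<open>b_err\<close> and \<open>w\<close> vanish, \<open>b_err'\<close> is asymptotically \<open>eta_err \<times> bh\<close>, whose
  derivative is bounded; so Barbalat forces \<open>eta_err \<times> bh\<close> to vanish as well.\<close>

lemma cross_eta_err_bh_tendsto_zero: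
  assumes i: "i < m"
  shows "((\<lambda>t. cross3 (eta_err t) (bh i t)) \<longlongrightarrow> 0) at_top"
proof -
  obtain BO where BO: "\<forall>t\<ge>0. norm (om_m t) \<le> BO" using om_bounded by blast
  obtain M where M: "\<forall>t\<ge>0.
      norm (cross3 (eta_err t) (bh_rate i t) + cross3 (Gam *v cross_sum t) (bh i t)) \<le> M"
    using cross_err_rate_bounded[OF i] by blast
  define h where "h t = - cross3 (om_m t - eta) (b_err i t) - w i t" for t
  have "\<forall>t\<ge>0. (b_err i has_vector_derivative cross3 (eta_err t) (bh i t) + h t) (at t within {0..})"
    using b_err_deriv[OF _ i] by (simp add: b_err_rate_eq h_def algebra_simps)
  moreover have "\<forall>t\<ge>0. ((\<lambda>t. cross3 (eta_err t) (bh i t)) has_vector_derivative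
      cross3 (eta_err t) (bh_rate i t) + cross3 (Gam *v cross_sum t) (bh i t)) (at t within {0..})"
    using bounded_bilinear.has_vector_derivative[OF bounded_bilinear_cross3 eta_err_deriv bh_deriv[OF _ i]]
    by simp
  moreover have "(h \<longlongrightarrow> 0) at_top"
  proof (rule Lim_null_comparison)
    show "eventually (\<lambda>t. norm (h t) \<le> (BO + norm eta) * norm (b_err i t) + norm (w i t)) at_top"
      using eventually_ge_at_top[of "0::real"]
    proof eventually_elim
      fix t :: real assume t: "t \<ge> 0"
      have "norm (om_m t - eta) \<le> BO + norm eta"
        using BO t norm_triangle_ineq4[of "om_m t" eta] by auto
      then have "norm (cross3 (om_m t - eta) (b_err i t)) \<le> (BO + norm eta) * norm (b_err i t)"
        by (rule norm_cross_le_mult) simp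
      moreover have "norm (h t) \<le> norm (cross3 (om_m t - eta) (b_err i t)) + norm (w i t)"
        using norm_triangle_ineq4[of "- cross3 (om_m t - eta) (b_err i t)" "w i t"] by (simp add: h_def)
      ultimately show "norm (h t) \<le> (BO + norm eta) * norm (b_err i t) + norm (w i t)" by linarith
    qed
    show "((\<lambda>t. (BO + norm eta) * norm (b_err i t) + norm (w i t)) \<longlongrightarrow> 0) at_top"
      using tendsto_mult_right_zero[OF tendsto_norm_zero[OF b_err_tendsto_zero[OF i]]]
        tendsto_norm_zero[OF w_tendsto_zero[OF i]]
      by (intro tendsto_add_zero)
  qed
  ultimately show ?thesis by (rule barbalat_vec[OF _ _ M _ b_err_tendsto_zero[OF i]])
qed

text \<open>\<open>eta_err \<times> b\<close> differs from \<open>eta_err \<times> bh\<close> by a term vanishing with \<open>b_err\<close>, and rotating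
  by \<open>R\<close> turns \<open>eta_err \<times> b\<^sub>i\<close> into \<open>(R eta_err) \<times> r\<^sub>i\<close>, where non-collinearity applies.\<close>

lemma eta_err_tendsto_zero:
  assumes "\<exists>i j. i < m \<and> j < m \<and> \<not> collinear {0, r i, r j}"
  shows "(eta_err \<longlongrightarrow> 0) at_top"
proof -
  obtain i j where ij: "i < m" "j < m" "\<not> collinear {0, r i, r j}" using assms by blast
  obtain B where B: "B > 0" "\<And>u. B * norm u \<le> norm (cross3 u (r i)) + norm (cross3 u (r j))"
    using noncollinear_cross_coercive[OF ij(3)] by blast
  define F where "F k t = norm (cross3 (eta_err t) (bh k t)) + eta_err_bound * norm (b_err k t)" for k t
  have cross_b: "norm (cross3 (eta_err t) (b k t)) \<le> F k t" if "t \<ge> 0" for t k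
  proof -
    have "cross3 (eta_err t) (b k t) = cross3 (eta_err t) (bh k t) + cross3 (eta_err t) (b_err k t)"
      by (simp add: b_err_def cross_add_right[symmetric])
    moreover have "norm (cross3 (eta_err t) (b_err k t)) \<le> eta_err_bound * norm (b_err k t)"
      by (rule norm_cross_le_mult[OF norm_eta_err_le[OF that] order_refl])
    ultimately show ?thesis unfolding F_def by (metis add_left_mono norm_triangle_le)
  qed
  have "norm (eta_err t) \<le> (F i t + F j t) / B" if t: "t \<ge> 0" for t
  proof -
    have "B * norm (eta_err t) = B * norm (R t *v eta_err t)"
      using R_SO3[OF t] by (simp add: SO3_def orthogonal_matrix_norm)
    also have "\<dots> \<le> norm (cross3 (eta_err t) (b i t)) + norm (cross3 (eta_err t) (b j t))"
      using B(2) SO3_norm_cross_transpose[OF R_SO3[OF t]] by (simp add: b_def meas_def)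
    also have "\<dots> \<le> F i t + F j t" using cross_b[OF t] add_mono by blast
    finally show ?thesis using B(1) by (simp add: le_divide_eq mult.commute)
  qed
  moreover have "(F k \<longlongrightarrow> 0) at_top" if "k < m" for k
    unfolding F_def[abs_def]
    by (intro tendsto_add_zero tendsto_norm_zero tendsto_mult_right_zero
        cross_eta_err_bh_tendsto_zero b_err_tendsto_zero that)
  then have "((\<lambda>t. (F i t + F j t) / B) \<longlongrightarrow> (0 + 0) / B) at_top"
    using ij B(1) by (intro tendsto_intros) auto
  ultimately show ?thesis
    by (intro Lim_null_comparison[of eta_err "\<lambda>t. (F i t + F j t) / B"] eventually_at_top_linorderI)
      simp_all
qed

lemma V0_le_lyap_initial_gain:
  assumes "\<forall>i<m. norm (b_err i 0) < d \<and> (\<forall>j<n - 1. norm (xd i j 0) < d)" "norm (eta_err 0) < d"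
  shows "V 0 \<le> lyap_initial_gain n m P Gam * d\<^sup>2"
proof -
  have "(\<Sum>i<m. quad_form dimX (P i) (X i 0)) \<le> (\<Sum>i<m. (\<Sum>p<dimX. \<Sum>q<dimX. \<bar>P i p q\<bar>) * d\<^sup>2)"
  proof (intro sum_mono quad_form_le_abs_sum allI impI)
    fix i p assume i: "i \<in> {..<m}" and p: "p < dimX"
    have "p div 3 < n - 1" using p by (simp add: less_mult_imp_div_less mult.commute)
    then have "norm (xd i (p div 3) 0) < d" using assms(1) i by auto
    moreover have "\<bar>comp3 (xd i (p div 3) 0) (p mod 3)\<bar> \<le> norm (xd i (p div 3) 0)"
      by (rule comp3_le_norm) simp
    ultimately show "\<bar>X i 0 p\<bar> \<le> d" unfolding X_eq[OF p] by linarith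
  qed
  moreover have "(\<Sum>i<m. b_err i 0 \<bullet> b_err i 0) \<le> (\<Sum>i<m. d\<^sup>2)"
    using assms(1) by (intro sum_mono) (simp add: power2_norm_eq_inner[symmetric] power_strict_mono
        less_imp_le)
  moreover have "(\<Sum>a\<in>UNIV. (eta_err 0 $ a)\<^sup>2 / Gam$a$a) \<le> (\<Sum>a\<in>UNIV. d\<^sup>2 * (1 / Gam$a$a))"
  proof (intro sum_mono)
    fix a :: 3
    have "\<bar>eta_err 0 $ a\<bar> \<le> d" using component_le_norm_cart[of "eta_err 0" a] assms(2) by linarith
    then have "(eta_err 0 $ a)\<^sup>2 \<le> d\<^sup>2" by (simp add: abs_le_square_iff[symmetric])
    then show "(eta_err 0 $ a)\<^sup>2 / Gam$a$a \<le> d\<^sup>2 * (1 / Gam$a$a)"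
      using Gam_pos[rule_format, of a] by (simp add: divide_right_mono)
  qed
  ultimately have "V 0 \<le> (\<Sum>i<m. (\<Sum>p<dimX. \<Sum>q<dimX. \<bar>P i p q\<bar>) * d\<^sup>2) + (\<Sum>i<m. d\<^sup>2)
      + (\<Sum>a\<in>UNIV. d\<^sup>2 * (1 / Gam$a$a))"
    unfolding V_def by linarith
  also have "\<dots> = lyap_initial_gain n m P Gam * d\<^sup>2"
    unfolding lyap_initial_gain_def by (simp add: sum_distrib_right sum_distrib_left algebra_simps)
  finally show ?thesis .
qed

lemma errors_le_stability_gain:
  assumes init: "\<forall>i<m. norm (b_err i 0) < d \<and> (\<forall>j<n - 1. norm (xd i j 0) < d)"
    "norm (eta_err 0) < d"
    and t: "t \<ge> 0"
  shows "(\<forall>i<m. norm (b_err i t) \<le> stability_gain n m P Gam * d)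
    \<and> norm (eta_err t) \<le> stability_gain n m P Gam * d"
proof -
  define K G where "K = lyap_initial_gain n m P Gam" and "G = (\<Sum>a\<in>UNIV. sqrt (Gam$a$a))"
  have d: "d > 0" using init(2) norm_ge_zero[of "eta_err 0"] by linarith
  have G: "G \<ge> 0" unfolding G_def using Gam_pos by (simp add: sum_nonneg less_imp_le)
  have sV: "sqrt (V 0) \<le> sqrt K * d"
    using real_sqrt_le_mono[OF V0_le_lyap_initial_gain[OF init]] d
    by (simp add: K_def real_sqrt_mult)
  then have sKd: "sqrt K * d \<ge> 0" using real_sqrt_ge_zero[OF V_nonneg[of 0]] by linarith
  have gain: "stability_gain n m P Gam * d = sqrt K * d + G * (sqrt K * d)"
    unfolding stability_gain_def K_def G_def by (simp add: algebra_simps)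
  have "eta_err_bound = G * sqrt (V 0)"
    unfolding eta_err_bound_def G_def by (simp add: real_sqrt_mult sum_distrib_right)
  also have "\<dots> \<le> G * (sqrt K * d)" by (rule mult_left_mono[OF sV G])
  finally have eta: "eta_err_bound \<le> G * (sqrt K * d)" .
  have "G * (sqrt K * d) \<ge> 0" using G sKd by simp
  then show ?thesis
    using norm_b_err_le[OF t] norm_eta_err_le[OF t] sV eta sKd unfolding gain
    by (smt (verit))
qed

lemma errors_tendsto_zero:
  assumes "\<exists>i j. i < m \<and> j < m \<and> \<not> collinear {0, r i, r j}"
  shows "(\<forall>i<m. ((\<lambda>t. meas R r i t - bh i t) \<longlongrightarrow> 0) at_top) \<and> ((\<lambda>t. eta - etah t) \<longlongrightarrow> 0) at_top"
  using b_err_tendsto_zero eta_err_tendsto_zero[OF assms]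
  unfolding b_err_def[abs_def] b_def eta_err_def[abs_def] by blast

end

lemma attitude_filter_uniformly_stable:
  assumes filter: "\<And>R bh etah xd. is_solution n m gam Gam P om_m eta r R bh etah xd \<Longrightarrow>
      attitude_filter n m gam Gam P Q om_m eta r R bh etah xd"
    and Gam_pos: "\<forall>a. Gam $ a $ a > 0"
  shows "\<forall>\<epsilon>>0. \<exists>\<delta>>0. \<forall>R bh etah xd.
        is_solution n m gam Gam P om_m eta r R bh etah xd \<and>
        (\<forall>i<m. norm (meas R r i 0 - bh i 0) < \<delta> \<and> (\<forall>j<n - 1. norm (xd i j 0) < \<delta>)) \<and>
        norm (eta - etah 0) < \<delta>
        \<longrightarrow> (\<forall>t\<ge>0. (\<forall>i<m. norm (meas R r i t - bh i t) < \<epsilon>) \<and> norm (eta - etah t) < \<epsilon>)"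
proof (intro allI impI)
  fix \<epsilon> :: real assume "\<epsilon> > 0"
  define C where "C = stability_gain n m P Gam"
  have "C \<ge> 0"
    unfolding C_def stability_gain_def lyap_initial_gain_def using Gam_pos
    by (intro mult_nonneg_nonneg add_nonneg_nonneg sum_nonneg real_sqrt_ge_zero) (auto intro: less_imp_le)
  define \<delta> where "\<delta> = \<epsilon> / (C + 1)"
  have "\<delta> > 0" "C * \<delta> < \<epsilon>"
    using \<open>\<epsilon> > 0\<close> \<open>C \<ge> 0\<close> by (simp_all add: \<delta>_def field_simps)
  show "\<exists>\<delta>>0. \<forall>R bh etah xd. is_solution n m gam Gam P om_m eta r R bh etah xd \<and>
      (\<forall>i<m. norm (meas R r i 0 - bh i 0) < \<delta> \<and> (\<forall>j<n - 1. norm (xd i j 0) < \<delta>)) \<and>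
      norm (eta - etah 0) < \<delta>
      \<longrightarrow> (\<forall>t\<ge>0. (\<forall>i<m. norm (meas R r i t - bh i t) < \<epsilon>) \<and> norm (eta - etah t) < \<epsilon>)"
  proof (rule exI[of _ \<delta>], rule conjI[OF \<open>\<delta> > 0\<close>], intro allI impI)
    fix R bh etah xd and t :: real
    assume init: "is_solution n m gam Gam P om_m eta r R bh etah xd \<and>
      (\<forall>i<m. norm (meas R r i 0 - bh i 0) < \<delta> \<and> (\<forall>j<n - 1. norm (xd i j 0) < \<delta>)) \<and>
      norm (eta - etah 0) < \<delta>" and "t \<ge> 0"
    interpret attitude_filter n m gam Gam P Q om_m eta r R bh etah xd using filter init by blast
    have "(\<forall>i<m. norm (b_err i t) \<le> C * \<delta>) \<and> norm (eta_err t) \<le> C * \<delta>"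
      unfolding C_def using init \<open>t \<ge> 0\<close>
      by (intro errors_le_stability_gain) (simp_all add: b_err_def b_def eta_err_def)
    then show "(\<forall>i<m. norm (meas R r i t - bh i t) < \<epsilon>) \<and> norm (eta - etah t) < \<epsilon>"
      using \<open>C * \<delta> < \<epsilon>\<close> unfolding b_err_def b_def eta_err_def by force
  qed
qed

theorem proposition2:
  fixes n m :: nat
    and gam :: "nat \<Rightarrow> nat \<Rightarrow> real"
    and Gam :: "real^3^3"
    and P Q :: "nat \<Rightarrow> nat \<Rightarrow> nat \<Rightarrow> real"
    and om_m :: "real \<Rightarrow> real^3"
    and eta :: "real^3"
    and r :: "nat \<Rightarrow> real^3"
  assumes n2: "n \<ge> 2"
    and hurw: "\<forall>i<m. hurwitz_coeffs (gam i) n \<and> hurwitz_coeffs (gam i) (n - 1)"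
    and Gam_diag: "\<forall>a b. a \<noteq> b \<longrightarrow> Gam $ a $ b = 0"
    and Gam_pos: "\<forall>a. Gam $ a $ a > 0"
    and Q_pd: "\<forall>i<m. posdef_on (3 * (n - 1)) (Q i)"
    and P_pd: "\<forall>i<m. posdef_on (3 * (n - 1)) (P i)"
    and P_lyap: "\<forall>i<m. lyap_eq (3 * (n - 1)) (Ap (gam i) n) (P i) (Q i)"
    and noncol: "\<exists>i j. i < m \<and> j < m \<and> \<not> collinear {0, r i, r j}"
    and om_bdd: "bounded (om_m ` {0..})"
  shows
    "(\<forall>R bh etah xd. is_solution n m gam Gam P om_m eta r R bh etah xd \<longrightarrow>
        (\<forall>i<m. ((\<lambda>t. meas R r i t - bh i t) \<longlongrightarrow> 0) at_top) \<and>
        ((\<lambda>t. eta - etah t) \<longlongrightarrow> 0) at_top)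
     \<and>
     (\<forall>\<epsilon>>0. \<exists>\<delta>>0. \<forall>R bh etah xd.
        is_solution n m gam Gam P om_m eta r R bh etah xd \<and>
        (\<forall>i<m. norm (meas R r i 0 - bh i 0) < \<delta> \<and> (\<forall>j<n - 1. norm (xd i j 0) < \<delta>)) \<and>
        norm (eta - etah 0) < \<delta>
        \<longrightarrow> (\<forall>t\<ge>0. (\<forall>i<m. norm (meas R r i t - bh i t) < \<epsilon>) \<and> norm (eta - etah t) < \<epsilon>))"
proof -
  have "\<forall>i<m. gam i n \<noteq> 0" using hurw n2 hurwitz_coeffs_last_nonzero by simp
  then have filter: "attitude_filter n m gam Gam P Q om_m eta r R bh etah xd"
    if "is_solution n m gam Gam P om_m eta r R bh etah xd" for R bh etah xd
    using n2 Gam_diag Gam_pos Q_pd P_pd P_lyap om_bdd that by unfold_locales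
  show ?thesis
    using attitude_filter.errors_tendsto_zero[OF filter noncol]
      attitude_filter_uniformly_stable[OF filter Gam_pos] by blast
qed

end
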